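(* Let $(X,\mathbf R)$ be a symmetric association scheme with $D$ classes, cometric with respect to $E_0,\dots,E_D$. Fix $x\in X$, let $T=T(x)$, let $\chi\in V$ be a code and set $\delta^*=\delta^*(\chi)$. Suppose $t\in\{1,\dots,D\}$ is such that $$|\{i\in W_s: E_i^*(x)\chi\ne0\}|\le \delta^*-r^*(W)$$ for every irreducible $T$-module $W\subseteq V$ with $1\le r^*(W)\le t$. If every irreducible $T$-module in $V$ with dual endpoint at most $t$ is dual thin, then $F\chi$ is a relative $t$-design with respect to $x$ for every $F\in T$.
   Context: $(X,\mathbf R)$ is a symmetric association scheme with associate matrices $A_0=I,\dots,A_D$, Bose–Mesner algebra $M$, primitive idempotents $E_0=|X|^{-1}J,\dots,E_D$; cometric means each $E_j$ is a polynomial of degree exactly $j$ in $E_1$ under entrywise multiplication. $V=\mathbb C^X$ with standard basis $\{\hat y\}$ and standard Hermitian inner product. $E_i^*(x)$ is diagonal with $(E_i^*(x))_{yy}=(A_i)_{xy}$; $A_i^*(x)$ is diagonal with $(A_i^*(x))_{yy}=|X|(E_i)_{xy}$; $T(x)$ is generated by $M$ and the $A_i^*(x)$. For an irreducible $T(x)$-module $W$: support $W_s=\{i:E_i^*(x)W\ne0\}$, dual endpoint $r^*(W)=\min\{j:E_jW\neq0\}$, dual thin means $\dim E_jW\le1$ for all $j$. A code is a vector $\chi\notin E_0V$ with $\chi\notin E_0^*(z)V$ for all $z$. $\delta^*(\chi)=\min\{j\ne0:E_j\chi\ne0\}$. $\psi$ is a relative $t$-design with respect to $x$ if $E_j\psi$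 and $E_j\hat x$ are linearly dependent for all $1\le j\le t$. *)

theory Defs
  imports "HOL-Computational_Algebra.Polynomial"
begin

type_synonym 'x mat = "'x \<Rightarrow> 'x \<Rightarrow> complex"
type_synonym 'x vec = "'x \<Rightarrow> complex"

definition mmult :: "('x::finite) mat \<Rightarrow> 'x mat \<Rightarrow> 'x mat" where
  "mmult A B = (\<lambda>y z. \<Sum>w\<in>UNIV. A y w * B w z)"

definition mvec :: "('x::finite) mat \<Rightarrow> 'x vec \<Rightarrow> 'x vec" where
  "mvec A v = (\<lambda>y. \<Sum>z\<in>UNIV. A y z * v z)"

definition zero_mat :: "'x mat" where "zero_mat = (\<lambda>y z. 0)"
definition zero_vec :: "'x vec" where "zero_vec = (\<lambda>y. 0)"

definition std_vec :: "'x \<Rightarrow> 'x vec" where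
  "std_vec y = (\<lambda>z. if z = y then 1 else 0)"

text \<open>The scheme is given by the class function \<open>cls\<close>: \<open>(y,z) \<in> R_i \<longleftrightarrow> cls y z = i\<close>,
  with classes \<open>R_0,\<dots>,R_D\<close>.\<close>

definition sym_assoc_scheme :: "nat \<Rightarrow> ('x::finite \<Rightarrow> 'x \<Rightarrow> nat) \<Rightarrow> bool" where
  "sym_assoc_scheme D cls \<longleftrightarrow>
     (\<forall>y z. cls y z \<le> D) \<and>
     (\<forall>y z. cls y z = 0 \<longleftrightarrow> y = z) \<and>
     (\<forall>y z. cls y z = cls z y) \<and>
     (\<forall>i\<le>D. \<exists>y z. cls y z = i) \<and>
     (\<forall>i j k. \<exists>p. \<forall>y z. cls y z = k \<longrightarrow> card {w. cls y w = i \<and> cls w z = j} = p)"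

definition assoc_mat :: "('x \<Rightarrow> 'x \<Rightarrow> nat) \<Rightarrow> nat \<Rightarrow> 'x mat" where
  "assoc_mat cls i = (\<lambda>y z. if cls y z = i then 1 else 0)"

definition bose_mesner :: "nat \<Rightarrow> ('x \<Rightarrow> 'x \<Rightarrow> nat) \<Rightarrow> 'x mat set" where
  "bose_mesner D cls = {M. \<exists>c. M = (\<lambda>y z. \<Sum>i\<le>D. c i * assoc_mat cls i y z)}"

text \<open>\<open>E_0,\<dots>,E_D\<close> are the primitive idempotents of the Bose--Mesner algebra (which has
  dimension \<open>D+1\<close>): \<open>D+1\<close> nonzero mutually orthogonal idempotents in it, with \<open>E_0 = |X|^{-1} J\<close>.\<close>
definition primitive_idempotents ::
    "nat \<Rightarrow> ('x::finite \<Rightarrow> 'x \<Rightarrow> nat) \<Rightarrow> (nat \<Rightarrow> 'x mat) \<Rightarrow> bool" where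
  "primitive_idempotents D cls E \<longleftrightarrow>
     (\<forall>i\<le>D. E i \<in> bose_mesner D cls \<and> E i \<noteq> zero_mat) \<and>
     (\<forall>i\<le>D. \<forall>j\<le>D. mmult (E i) (E j) = (if i = j then E i else zero_mat)) \<and>
     E 0 = (\<lambda>y z. 1 / of_nat (card (UNIV :: 'x set)))"

text \<open>cometric: \<open>E_j\<close> is a polynomial of degree exactly \<open>j\<close> in \<open>E_1\<close> under entrywise
  (Hadamard) multiplication; the Hadamard power \<open>E_1^{\<circ>k}\<close> has entries \<open>(E_1)_{yz}^k\<close>.\<close>
definition cometric :: "nat \<Rightarrow> (nat \<Rightarrow> 'x mat) \<Rightarrow> bool" where
  "cometric D E \<longleftrightarrow>
     (\<forall>j\<le>D. \<exists>p :: complex poly. degree p = j \<and> E j = (\<lambda>y z. poly p (E 1 y z)))"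

definition dual_idem :: "('x \<Rightarrow> 'x \<Rightarrow> nat) \<Rightarrow> nat \<Rightarrow> 'x \<Rightarrow> 'x mat" where
  "dual_idem cls i x = (\<lambda>y z. if y = z then assoc_mat cls i x y else 0)"

definition dual_adj :: "(nat \<Rightarrow> 'x mat) \<Rightarrow> nat \<Rightarrow> 'x \<Rightarrow> 'x mat" where
  "dual_adj E i x = (\<lambda>y z. if y = z then of_nat (card (UNIV :: 'x set)) * E i x y else 0)"

inductive_set terw_alg ::
    "nat \<Rightarrow> ('x::finite \<Rightarrow> 'x \<Rightarrow> nat) \<Rightarrow> (nat \<Rightarrow> 'x mat) \<Rightarrow> 'x \<Rightarrow> 'x mat set"
  for D cls E x where
  gen_A: "i \<le> D \<Longrightarrow> assoc_mat cls i \<in> terw_alg D cls E x"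
| gen_Astar: "i \<le> D \<Longrightarrow> dual_adj E i x \<in> terw_alg D cls E x"
| add: "A \<in> terw_alg D cls E x \<Longrightarrow> B \<in> terw_alg D cls E x
          \<Longrightarrow> (\<lambda>y z. A y z + B y z) \<in> terw_alg D cls E x"
| smult: "A \<in> terw_alg D cls E x \<Longrightarrow> (\<lambda>y z. c * A y z) \<in> terw_alg D cls E x"
| mult: "A \<in> terw_alg D cls E x \<Longrightarrow> B \<in> terw_alg D cls E x
          \<Longrightarrow> mmult A B \<in> terw_alg D cls E x"

definition csubspace :: "'x vec set \<Rightarrow> bool" where
  "csubspace W \<longleftrightarrow> zero_vec \<in> W \<and> (\<forall>u\<in>W. \<forall>v\<in>W. (\<lambda>y. u y + v y) \<in> W)
                   \<and> (\<forall>c. \<forall>u\<in>W. (\<lambda>y. c * u y) \<in> W)"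

definition is_module :: "('x::finite) mat set \<Rightarrow> 'x vec set \<Rightarrow> bool" where
  "is_module T W \<longleftrightarrow> csubspace W \<and> (\<forall>F\<in>T. \<forall>w\<in>W. mvec F w \<in> W)"

definition irreducible_module :: "('x::finite) mat set \<Rightarrow> 'x vec set \<Rightarrow> bool" where
  "irreducible_module T W \<longleftrightarrow> is_module T W \<and> W \<noteq> {zero_vec} \<and>
     (\<forall>U. is_module T U \<and> U \<subseteq> W \<longrightarrow> U = {zero_vec} \<or> U = W)"

definition module_support :: "nat \<Rightarrow> ('x::finite \<Rightarrow> 'x \<Rightarrow> nat) \<Rightarrow> 'x \<Rightarrow> 'x vec set \<Rightarrow> nat set" where
  "module_support D cls x W = {i. i \<le> D \<and> (\<exists>w\<in>W. mvec (dual_idem cls i x) w \<noteq> zero_vec)}"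

definition dual_endpoint :: "nat \<Rightarrow> (nat \<Rightarrow> ('x::finite) mat) \<Rightarrow> 'x vec set \<Rightarrow> nat" where
  "dual_endpoint D E W = (LEAST j. j \<le> D \<and> (\<exists>w\<in>W. mvec (E j) w \<noteq> zero_vec))"

text \<open>dual thin: \<open>dim (E_j W) \<le> 1\<close> for all \<open>j\<close>, i.e. \<open>E_j W\<close> lies in the span of one vector\<close>
definition dual_thin :: "nat \<Rightarrow> (nat \<Rightarrow> ('x::finite) mat) \<Rightarrow> 'x vec set \<Rightarrow> bool" where
  "dual_thin D E W \<longleftrightarrow> (\<forall>j\<le>D. \<exists>u. \<forall>w\<in>W. \<exists>c. mvec (E j) w = (\<lambda>y. c * u y))"

definition is_code :: "('x::finite \<Rightarrow> 'x \<Rightarrow> nat) \<Rightarrow> (nat \<Rightarrow> 'x mat) \<Rightarrow> 'x vec \<Rightarrow> bool" where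
  "is_code cls E \<chi> \<longleftrightarrow> \<chi> \<notin> range (mvec (E 0)) \<and> (\<forall>z. \<chi> \<notin> range (mvec (dual_idem cls 0 z)))"

definition dual_degree :: "nat \<Rightarrow> (nat \<Rightarrow> ('x::finite) mat) \<Rightarrow> 'x vec \<Rightarrow> nat" where
  "dual_degree D E \<chi> = (LEAST j. j \<noteq> 0 \<and> j \<le> D \<and> mvec (E j) \<chi> \<noteq> zero_vec)"

definition relative_design :: "(nat \<Rightarrow> ('x::finite) mat) \<Rightarrow> 'x vec \<Rightarrow> 'x \<Rightarrow> nat \<Rightarrow> bool" where
  "relative_design E \<psi> x t \<longleftrightarrow>
     (\<forall>j. 1 \<le> j \<and> j \<le> t \<longrightarrow>
        (\<exists>a b. (a \<noteq> 0 \<or> b \<noteq> 0) \<and>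
           (\<lambda>y. a * mvec (E j) \<psi> y + b * mvec (E j) (std_vec x) y) = zero_vec))"

end

(* Let Z be the sum of the radial vectors (those constant on the spheres around x, i.e. the
   primary T-module, whose E_j-components are multiples of E_j applied to the characteristic
   vector of x) and of the vectors all of whose T-images have no E_1, ..., E_t-component.
   Every F psi with psi in Z is a relative t-design, so it suffices to show that chi lies in Z.
   Otherwise, T being closed under adjoints, chi has a nonzero component v in an irreducible
   T-module W orthogonal to Z.  Orthogonality to Z forces 1 <= r*(W) <= t, so W is dual thin;
   v inherits from chi the vanishing of E_1 v, ..., E_(delta*-1) v, and its support lies in the
   spheres on which chi is nonzero.  By the Krein condition of a cometric scheme and thinness,
   A*_1 - theta lowers the bottom dual level of a vector of W by exactly one while deleting the
   dual eigenvalue theta from its support.  Iterating, the bottom level of v is less than r*(W)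
   plus the number of those spheres, which by hypothesis is at most delta*: a contradiction. *)

theory Submission
  imports Defs "HOL-Library.Function_Algebras"
begin

lemma sum_fun_apply: "(sum f S) y = (\<Sum>v\<in>S. f v y)"
  by (induction S rule: infinite_finite_induct) auto

lemma zero_mat_eq_0 [simp]: "zero_mat = 0"
  by (simp add: zero_mat_def fun_eq_iff)

lemma zero_vec_eq_0 [simp]: "zero_vec = 0"
  by (simp add: zero_vec_def fun_eq_iff)

definition mat_scale :: "complex \<Rightarrow> 'x mat \<Rightarrow> 'x mat" where
  "mat_scale c A = (\<lambda>y z. c * A y z)"

definition vec_scale :: "complex \<Rightarrow> 'x vec \<Rightarrow> 'x vec" where
  "vec_scale c u = (\<lambda>y. c * u y)"

interpretation Mat: vector_space "mat_scale :: complex \<Rightarrow> 'x mat \<Rightarrow> 'x mat"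
  by unfold_locales (auto simp: mat_scale_def fun_eq_iff algebra_simps)

interpretation Vec: vector_space "vec_scale :: complex \<Rightarrow> 'x vec \<Rightarrow> 'x vec"
  by unfold_locales (auto simp: vec_scale_def fun_eq_iff algebra_simps)

lemma mat_scale_cancel: "mat_scale a A = mat_scale b A \<Longrightarrow> A \<noteq> 0 \<Longrightarrow> a = b"
  by (auto simp: mat_scale_def fun_eq_iff dest!: fun_cong)

lemma if_0_mult [simp]: "(if P then a else 0) * (b::complex) = (if P then a * b else 0)"
  by simp

lemma mult_if_0 [simp]: "(a::complex) * (if P then b else 0) = (if P then a * b else 0)"
  by simp

definition id_mat :: "'x mat" where
  "id_mat = (\<lambda>y z. if y = z then 1 else 0)"

definition conj_mat :: "'x mat \<Rightarrow> 'x mat" where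
  "conj_mat A = (\<lambda>y z. cnj (A y z))"

definition mat_adjoint :: "'x mat \<Rightarrow> 'x mat" where
  "mat_adjoint A = (\<lambda>y z. cnj (A z y))"

context
  fixes A B C :: "('x::finite) mat"
begin

lemma mmult_assoc: "mmult (mmult A B) C = mmult A (mmult B C)"
  unfolding mmult_def
  by (auto simp: fun_eq_iff sum_distrib_left sum_distrib_right mult.assoc intro: sum.swap)

lemma mvec_mmult: "mvec (mmult A B) v = mvec A (mvec B v)"
  unfolding mmult_def mvec_def
  by (auto simp: fun_eq_iff sum_distrib_left sum_distrib_right mult.assoc intro: sum.swap)

lemma mmult_sum_left: "mmult (sum f S) A = (\<Sum>v\<in>S. mmult (f v) A)"
  unfolding mmult_def by (auto simp: fun_eq_iff sum_fun_apply sum_distrib_right intro: sum.swap)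

lemma mmult_sum_right: "mmult A (sum f S) = (\<Sum>v\<in>S. mmult A (f v))"
  unfolding mmult_def by (auto simp: fun_eq_iff sum_fun_apply sum_distrib_left intro: sum.swap)

lemma mmult_scale_left: "mmult (mat_scale c A) B = mat_scale c (mmult A B)"
  unfolding mmult_def mat_scale_def by (auto simp: fun_eq_iff sum_distrib_left algebra_simps)

lemma mmult_scale_right: "mmult A (mat_scale c B) = mat_scale c (mmult A B)"
  unfolding mmult_def mat_scale_def by (auto simp: fun_eq_iff sum_distrib_left algebra_simps)

lemma mmult_id_mat_left [simp]: "mmult id_mat A = A"
  by (simp add: mmult_def id_mat_def fun_eq_iff)

lemma mmult_id_mat_right [simp]: "mmult A id_mat = A"
  by (simp add: mmult_def id_mat_def fun_eq_iff)

lemma mmult_zero_left [simp]: "mmult 0 A = 0"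
  by (simp add: mmult_def fun_eq_iff)

lemma mmult_zero_right [simp]: "mmult A 0 = 0"
  by (simp add: mmult_def fun_eq_iff)

lemma conj_mat_zero [simp]: "conj_mat 0 = 0"
  by (simp add: conj_mat_def fun_eq_iff)

lemma conj_mat_mmult: "mmult (conj_mat A) (conj_mat B) = conj_mat (mmult A B)"
  by (simp add: conj_mat_def mmult_def fun_eq_iff)

lemma mat_adjoint_mmult: "mat_adjoint (mmult A B) = mmult (mat_adjoint B) (mat_adjoint A)"
  by (simp add: mat_adjoint_def mmult_def fun_eq_iff mult.commute)

lemma mvec_add: "mvec A (u + w) = mvec A u + mvec A w"
  by (simp add: mvec_def fun_eq_iff algebra_simps sum.distrib)

lemma mvec_diff: "mvec A (u - w) = mvec A u - mvec A w"
  by (simp add: mvec_def fun_eq_iff algebra_simps sum_subtractf)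

lemma mvec_scale: "mvec A (vec_scale c u) = vec_scale c (mvec A u)"
  by (simp add: mvec_def fun_eq_iff vec_scale_def sum_distrib_left algebra_simps)

lemma mvec_zero [simp]: "mvec A 0 = 0"
  by (simp add: mvec_def fun_eq_iff)

lemma mvec_sum: "mvec A (sum f S) = (\<Sum>s\<in>S. mvec A (f s))"
  by (simp add: mvec_def fun_eq_iff sum_fun_apply sum_distrib_left sum.swap[of _ UNIV S])

lemma mvec_mat_add: "mvec (\<lambda>y z. A y z + B y z) w = mvec A w + mvec B w"
  by (simp add: mvec_def fun_eq_iff algebra_simps sum.distrib)

lemma mvec_mat_scale: "mvec (mat_scale c A) w = vec_scale c (mvec A w)"
  by (simp add: mvec_def mat_scale_def fun_eq_iff vec_scale_def sum_distrib_left algebra_simps)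

end

lemma mult_vec_scale: "a * vec_scale c u = vec_scale c (a * u)"
  by (simp add: vec_scale_def fun_eq_iff algebra_simps)

lemma std_vec_independent: "Vec.independent (range (std_vec :: ('x::finite) \<Rightarrow> 'x vec))"
proof -
  have inj: "inj (std_vec :: 'x \<Rightarrow> 'x vec)"
    by (rule injI) (auto simp: std_vec_def fun_eq_iff split: if_splits)
  have "c (std_vec z) = 0"
    if "(\<Sum>v\<in>range (std_vec :: 'x \<Rightarrow> 'x vec). vec_scale (c v) v) = 0" for c z
  proof -
    have "(\<Sum>y\<in>UNIV. vec_scale (c (std_vec y)) (std_vec y :: 'x vec)) = 0"
      using that by (simp add: sum.reindex[OF inj])
    then show ?thesis
      by (auto simp: fun_eq_iff sum_fun_apply vec_scale_def std_vec_def if_distrib[of "(*) _"]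
          cong: if_cong dest!: spec[of _ z])
  qed
  then show ?thesis by (subst Vec.dependent_finite) auto
qed

lemma std_vec_span: "Vec.span (range (std_vec :: ('x::finite) \<Rightarrow> 'x vec)) = UNIV"
proof -
  have "u = (\<Sum>y\<in>UNIV. vec_scale (u y) (std_vec y))" for u :: "'x vec"
    by (simp add: fun_eq_iff sum_fun_apply vec_scale_def std_vec_def if_distrib[of "(*) _"]
        cong: if_cong)
  moreover have "(\<Sum>y\<in>UNIV. vec_scale (u y) (std_vec y)) \<in> Vec.span (range std_vec)" for u :: "'x vec"
    by (intro Vec.span_sum Vec.span_scale Vec.span_base) auto
  ultimately show ?thesis by (metis UNIV_eq_I)
qed

interpretation Vec_fin: finite_dimensional_vector_space
    "vec_scale :: complex \<Rightarrow> ('x::finite) vec \<Rightarrow> 'x vec" "range std_vec"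
  by unfold_locales (auto simp: std_vec_independent std_vec_span)

lemma csubspace_iff_subspace: "csubspace U \<longleftrightarrow> Vec.subspace U"
  by (simp add: csubspace_def Vec.subspace_def plus_fun_def vec_scale_def)

lemma is_module_iff: "is_module T U \<longleftrightarrow> Vec.subspace U \<and> (\<forall>F\<in>T. \<forall>w\<in>U. mvec F w \<in> U)"
  by (simp add: is_module_def csubspace_iff_subspace)

definition cinner :: "('x::finite) vec \<Rightarrow> 'x vec \<Rightarrow> complex" where
  "cinner u w = (\<Sum>y\<in>UNIV. cnj (u y) * w y)"

definition orth_compl :: "('x::finite) vec set \<Rightarrow> 'x vec set" where
  "orth_compl U = {b. \<forall>u\<in>U. cinner b u = 0}"

lemma cinner_add_left: "cinner (u + v) w = cinner u w + cinner v w"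
  by (simp add: cinner_def sum.distrib algebra_simps)

lemma cinner_add_right: "cinner u (v + w) = cinner u v + cinner u w"
  by (simp add: cinner_def sum.distrib algebra_simps)

lemma cinner_diff_left: "cinner (u - v) w = cinner u w - cinner v w"
  by (simp add: cinner_def sum_subtractf algebra_simps)

lemma cinner_diff_right: "cinner u (v - w) = cinner u v - cinner u w"
  by (simp add: cinner_def sum_subtractf algebra_simps)

lemma cinner_scale_left: "cinner (vec_scale c u) w = cnj c * cinner u w"
  by (simp add: cinner_def vec_scale_def sum_distrib_left algebra_simps)

lemma cinner_scale_right: "cinner u (vec_scale c w) = c * cinner u w"
  by (simp add: cinner_def vec_scale_def sum_distrib_left algebra_simps)

lemma cinner_zero_left [simp]: "cinner 0 w = 0"
  by (simp add: cinner_def)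

lemma cinner_zero_right [simp]: "cinner u 0 = 0"
  by (simp add: cinner_def)

lemma cinner_zero_right' [simp]: "cinner u (\<lambda>_. 0) = 0"
  by (simp add: cinner_def)

lemma cinner_commute: "cnj (cinner u w) = cinner w u"
  by (simp add: cinner_def mult.commute)

lemma cinner_self_eq_0: "cinner u u = 0 \<Longrightarrow> u = 0"
proof -
  assume "cinner u u = 0"
  moreover have "cinner u u = of_real (\<Sum>y\<in>UNIV. (cmod (u y))\<^sup>2)"
    unfolding cinner_def of_real_sum
    by (intro sum.cong refl) (metis complex_norm_square mult.commute of_real_power)
  ultimately have "(\<Sum>y\<in>UNIV. (cmod (u y))\<^sup>2) = 0"
    by (simp only: of_real_eq_0_iff)
  then show "u = 0"
    by (subst (asm) sum_nonneg_eq_0_iff) (auto simp: fun_eq_iff)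
qed

lemma cinner_mvec: "cinner (mvec F b) u = cinner b (mvec (mat_adjoint F) u)"
proof -
  have "cinner (mvec F b) u = (\<Sum>y\<in>UNIV. \<Sum>z\<in>UNIV. cnj (F y z) * cnj (b z) * u y)"
    by (simp add: cinner_def mvec_def sum_distrib_right)
  also have "\<dots> = (\<Sum>z\<in>UNIV. \<Sum>y\<in>UNIV. cnj (F y z) * cnj (b z) * u y)"
    by (rule sum.swap)
  also have "\<dots> = cinner b (mvec (mat_adjoint F) u)"
    by (simp add: cinner_def mvec_def mat_adjoint_def sum_distrib_left mult_ac)
  finally show ?thesis .
qed

lemma subspace_orth_compl: "Vec.subspace (orth_compl U)"
  by (auto simp: Vec.subspace_def orth_compl_def cinner_add_left cinner_scale_left)

lemma orth_compl_orthogonal: "b \<in> orth_compl U \<Longrightarrow> u \<in> U \<Longrightarrow> cinner u b = 0"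
  unfolding orth_compl_def using cinner_commute[of b u] by simp

lemma orth_compl_disjoint: "w \<in> U \<Longrightarrow> w \<in> orth_compl U \<Longrightarrow> w = 0"
  unfolding orth_compl_def using cinner_self_eq_0 by blast

lemma orth_compl_antimono: "W \<subseteq> U \<Longrightarrow> orth_compl U \<subseteq> orth_compl W"
  unfolding orth_compl_def by auto

text \<open>Gram--Schmidt: orthogonalise the new generator \<open>b\<close> against \<open>span B\<close>.\<close>
lemma orth_proj_span_exists:
  "finite B \<Longrightarrow> \<exists>a\<in>Vec.span B. \<forall>w\<in>Vec.span B. cinner (u - a) w = 0"
proof (induction B arbitrary: u rule: finite_induct)
  case empty
  show ?case by (rule bexI[of _ 0]) auto
next
  case (insert b B)
  obtain ab where ab: "ab \<in> Vec.span B" "\<forall>w\<in>Vec.span B. cinner (b - ab) w = 0"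
    using insert.IH by blast
  obtain au where au: "au \<in> Vec.span B" "\<forall>w\<in>Vec.span B. cinner (u - au) w = 0"
    using insert.IH by blast
  define b' where "b' = b - ab"
  define a where "a = au + vec_scale (cinner b' u / cinner b' b') b'"
  have b'_orth: "cinner b' w = 0" if "w \<in> Vec.span B" for w
    using ab that by (simp add: b'_def)
  have span_mono: "Vec.span B \<subseteq> Vec.span (insert b B)"
    by (rule Vec.span_mono) auto
  have "b \<in> Vec.span (insert b B)"
    by (rule Vec.span_base) simp
  then have "b' \<in> Vec.span (insert b B)"
    unfolding b'_def using span_mono ab(1) by (intro Vec.span_diff) auto
  then have a_in: "a \<in> Vec.span (insert b B)"
    unfolding a_def using span_mono au(1) by (intro Vec.span_add Vec.span_scale) auto
  have orth_B: "cinner (u - a) w = 0" if "w \<in> Vec.span B" for w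
    using au(2) that b'_orth[OF that]
    by (simp add: a_def cinner_diff_left cinner_add_left cinner_scale_left)
  have orth_b': "cinner (u - a) b' = 0"
  proof (cases "cinner b' b' = 0")
    case True
    then have "b' = 0" by (rule cinner_self_eq_0)
    then show ?thesis by simp
  next
    case False
    have "cinner (u - au) b' = cnj (cinner b' u)"
      using b'_orth[OF au(1)] by (metis cinner_commute cinner_diff_right diff_zero)
    moreover have "cnj (cinner b' b') = cinner b' b'"
      by (rule cinner_commute)
    ultimately show ?thesis
      using False by (simp add: a_def cinner_diff_left cinner_add_left cinner_scale_left diff_eq_eq)
  qed
  have "cinner (u - a) w = 0" if w: "w \<in> Vec.span (insert b B)" for w
  proof -
    obtain k where k: "w - vec_scale k b \<in> Vec.span B"
      using w Vec.span_insert by blast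
    have "w = (w - vec_scale k b) + vec_scale k b' + vec_scale k ab"
      by (simp add: b'_def vec_scale_def fun_eq_iff algebra_simps)
    then have "cinner (u - a) w
        = cinner (u - a) (w - vec_scale k b) + k * cinner (u - a) b' + k * cinner (u - a) ab"
      by (metis cinner_add_right cinner_scale_right)
    then show ?thesis
      using orth_B[OF k] orth_B[OF ab(1)] orth_b' by simp
  qed
  with a_in show ?case by blast
qed

lemma orth_proj_exists:
  fixes U :: "('x::finite) vec set"
  assumes "Vec.subspace U"
  shows "\<exists>a\<in>U. u - a \<in> orth_compl U"
proof -
  obtain B where B: "B \<subseteq> U" "Vec.independent B" "U \<subseteq> Vec.span B"
    by (rule Vec.basis_exists[of U])
  then have "finite B" "Vec.span B = U"
    using Vec_fin.finiteI_independent Vec.span_minimal[OF B(1) assms] by auto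
  then show ?thesis
    using orth_proj_span_exists unfolding orth_compl_def by fastforce
qed

lemma dim_psubset_subspace:
  fixes U V :: "('x::finite) vec set"
  assumes "Vec.subspace U" "Vec.subspace V" "U \<subset> V"
  shows "Vec.dim U < Vec.dim V"
  using Vec_fin.dim_psubset[of U V] assms Vec.span_eq_iff by metis

lemma dual_endpoint_le:
  assumes "j \<le> D" "w \<in> W" "mvec (E j) w \<noteq> 0"
  shows "dual_endpoint D E W \<le> j"
  unfolding dual_endpoint_def using assms by (intro Least_le) auto

lemma dual_endpoint_attained:
  assumes "j \<le> D" "w \<in> W" "mvec (E j) w \<noteq> 0"
  shows "dual_endpoint D E W \<le> D" "\<exists>w\<in>W. mvec (E (dual_endpoint D E W)) w \<noteq> 0"
proof -
  have "j \<le> D \<and> (\<exists>w\<in>W. mvec (E j) w \<noteq> zero_vec)"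
    using assms by auto
  then have "dual_endpoint D E W \<le> D \<and> (\<exists>w\<in>W. mvec (E (dual_endpoint D E W)) w \<noteq> zero_vec)"
    unfolding dual_endpoint_def by (rule LeastI)
  then show "dual_endpoint D E W \<le> D" "\<exists>w\<in>W. mvec (E (dual_endpoint D E W)) w \<noteq> 0"
    by simp_all
qed

lemma below_dual_endpoint:
  assumes "k < dual_endpoint D E W" "dual_endpoint D E W \<le> D" "w \<in> W"
  shows "mvec (E k) w = 0"
proof -
  have "\<not> (k \<le> D \<and> (\<exists>w\<in>W. mvec (E k) w \<noteq> zero_vec))"
    using assms(1) unfolding dual_endpoint_def by (rule not_less_Least)
  then show ?thesis
    using assms by auto
qed

lemma below_dual_degree:
  assumes "1 \<le> k" "k < dual_degree D E \<chi>" "k \<le> D"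
  shows "mvec (E k) \<chi> = 0"
proof -
  have "\<not> (k \<noteq> 0 \<and> k \<le> D \<and> mvec (E k) \<chi> \<noteq> zero_vec)"
    using assms(2) unfolding dual_degree_def by (rule not_less_Least)
  then show ?thesis
    using assms by auto
qed

lemma dual_thin_proportional:
  assumes "dual_thin D E W" "p \<le> D" "u \<in> W" "mvec (E p) u \<noteq> 0" "w \<in> W"
  shows "\<exists>c. mvec (E p) w = vec_scale c (mvec (E p) u)"
proof -
  obtain e where e: "\<forall>w\<in>W. \<exists>c. mvec (E p) w = (\<lambda>y. c * e y)"
    using assms(1,2) by (auto simp: dual_thin_def)
  obtain c0 c where c0: "mvec (E p) u = (\<lambda>y. c0 * e y)" and c: "mvec (E p) w = (\<lambda>y. c * e y)"
    using e assms(3,5) by blast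
  have "c0 \<noteq> 0"
  proof
    assume "c0 = 0"
    then have "mvec (E p) u = 0"
      by (simp add: c0 fun_eq_iff)
    with assms(4) show False ..
  qed
  then have "mvec (E p) w = vec_scale (c / c0) (mvec (E p) u)"
    by (simp add: c c0 vec_scale_def fun_eq_iff)
  then show ?thesis ..
qed

section \<open>The Bose--Mesner algebra\<close>

locale sym_scheme =
  fixes D :: nat and cls :: "'x::finite \<Rightarrow> 'x \<Rightarrow> nat" and E :: "nat \<Rightarrow> 'x mat"
  assumes scheme: "sym_assoc_scheme D cls"
    and idempotents: "primitive_idempotents D cls E"
begin

lemma cls_le: "cls y z \<le> D"
  using scheme by (simp add: sym_assoc_scheme_def)

lemma cls_eq_0_iff: "cls y z = 0 \<longleftrightarrow> y = z"
  using scheme by (simp add: sym_assoc_scheme_def)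

lemma cls_sym: "cls y z = cls z y"
  using scheme by (simp add: sym_assoc_scheme_def)

lemma intersection_number:
  "\<exists>p. \<forall>y z. cls y z = k \<longrightarrow> card {w. cls y w = i \<and> cls w z = j} = p"
  using scheme unfolding sym_assoc_scheme_def by blast

lemma E_in_bose_mesner: "i \<le> D \<Longrightarrow> E i \<in> bose_mesner D cls"
  using idempotents by (simp add: primitive_idempotents_def)

lemma E_nonzero: "i \<le> D \<Longrightarrow> E i \<noteq> 0"
  using idempotents by (simp add: primitive_idempotents_def)

lemma mmult_E_E: "i \<le> D \<Longrightarrow> j \<le> D \<Longrightarrow> mmult (E i) (E j) = (if i = j then E i else 0)"
  using idempotents by (simp add: primitive_idempotents_def)

lemma E_0: "E 0 = (\<lambda>y z. 1 / of_nat (card (UNIV :: 'x set)))"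
  using idempotents by (simp add: primitive_idempotents_def)

lemma bose_mesner_entry:
  assumes "B \<in> bose_mesner D cls"
  shows "\<exists>f. \<forall>y z. B y z = f (cls y z)"
proof -
  obtain c where c: "B = (\<lambda>y z. \<Sum>i\<le>D. c i * assoc_mat cls i y z)"
    using assms by (auto simp: bose_mesner_def)
  have "B y z = c (cls y z)" for y z
    using cls_le[of y z] by (simp add: c assoc_mat_def if_distrib cong: if_cong)
  then show ?thesis by blast
qed

lemma E_cong: "i \<le> D \<Longrightarrow> cls y z = cls y' z' \<Longrightarrow> E i y z = E i y' z'"
  using bose_mesner_entry[OF E_in_bose_mesner] by metis

lemma E_sym: "i \<le> D \<Longrightarrow> E i y z = E i z y"
  using E_cong cls_sym by metis

lemma assoc_mat_in_bose_mesner: "i \<le> D \<Longrightarrow> assoc_mat cls i \<in> bose_mesner D cls"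
  unfolding bose_mesner_def
  by (rule CollectI, rule exI[of _ "\<lambda>j. if j = i then 1 else 0"]) (auto simp: fun_eq_iff)

lemma assoc_mat_0: "assoc_mat cls 0 = id_mat"
  by (simp add: assoc_mat_def id_mat_def cls_eq_0_iff fun_eq_iff)

lemma bose_mesner_in_span_assoc_mat:
  assumes "B \<in> bose_mesner D cls"
  shows "B \<in> Mat.span (assoc_mat cls ` {..D})"
proof -
  obtain c where c: "B = (\<lambda>y z. \<Sum>i\<le>D. c i * assoc_mat cls i y z)"
    using assms by (auto simp: bose_mesner_def)
  have "B = (\<Sum>i\<le>D. mat_scale (c i) (assoc_mat cls i))"
    by (simp add: c fun_eq_iff sum_fun_apply mat_scale_def)
  also have "\<dots> \<in> Mat.span (assoc_mat cls ` {..D})"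
    by (intro Mat.span_sum Mat.span_scale Mat.span_base) auto
  finally show ?thesis .
qed

lemma mmult_E_expansion:
  assumes j: "j \<le> D"
  shows "mmult (\<Sum>k\<le>D. mat_scale (c k) (E k)) (E j) = mat_scale (c j) (E j)"
    and "mmult (E j) (\<Sum>k\<le>D. mat_scale (c k) (E k)) = mat_scale (c j) (E j)"
  using j by (simp_all add: mmult_sum_left mmult_sum_right mmult_scale_left mmult_scale_right
      mmult_E_E if_distrib[of "mat_scale _"] cong: if_cong)

lemma E_inj: "inj_on E {..D}"
proof (rule inj_onI)
  fix i j assume ij: "i \<in> {..D}" "j \<in> {..D}" "E i = E j"
  then have "mmult (E i) (E j) = E i"
    using mmult_E_E[of i i] by simp
  then show "i = j"
    using ij mmult_E_E[of i j] E_nonzero[of i] by (auto split: if_splits)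
qed

lemma E_independent: "Mat.independent (E ` {..D})"
proof -
  have "u (E j) = 0" if u: "(\<Sum>v\<in>E ` {..D}. mat_scale (u v) v) = 0" and j: "j \<le> D" for u j
  proof -
    have "(\<Sum>k\<le>D. mat_scale (u (E k)) (E k)) = 0"
      using u by (simp add: sum.reindex[OF E_inj])
    then have "mat_scale (u (E j)) (E j) = mat_scale 0 (E j)"
      using mmult_E_expansion(2)[OF j, of "\<lambda>k. u (E k)"] by simp
    then show ?thesis
      using mat_scale_cancel E_nonzero j by blast
  qed
  then show ?thesis by (subst Mat.dependent_finite) auto
qed

text \<open>The \<open>D + 1\<close> independent \<open>E i\<close> lie in the span of the \<open>D + 1\<close> matrices \<open>A i\<close>,
  so they span it as well.\<close>
lemma assoc_mat_in_span_E:
  assumes i: "i \<le> D"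
  shows "assoc_mat cls i \<in> Mat.span (E ` {..D})"
proof (rule ccontr)
  assume notin: "assoc_mat cls i \<notin> Mat.span (E ` {..D})"
  have indep: "Mat.independent (insert (assoc_mat cls i) (E ` {..D}))"
    using Mat.independent_insertI[OF notin E_independent] .
  have sub: "insert (assoc_mat cls i) (E ` {..D}) \<subseteq> Mat.span (assoc_mat cls ` {..D})"
    using i E_in_bose_mesner bose_mesner_in_span_assoc_mat
    by (auto intro: Mat.span_base)
  have "card (insert (assoc_mat cls i) (E ` {..D})) \<le> card (assoc_mat cls ` {..D})"
    using Mat.independent_span_bound[OF _ indep sub] by simp
  also have "\<dots> \<le> Suc D"
    using card_image_le[of "{..D}" "assoc_mat cls"] by simp
  finally have "card (insert (assoc_mat cls i) (E ` {..D})) \<le> Suc D" .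
  moreover have "assoc_mat cls i \<notin> E ` {..D}"
    using notin Mat.span_base[of "assoc_mat cls i" "E ` {..D}"] by blast
  ultimately show False
    using card_image[OF E_inj] by simp
qed

lemma bose_mesner_expansion:
  assumes "B \<in> bose_mesner D cls"
  shows "\<exists>c. B = (\<Sum>k\<le>D. mat_scale (c k) (E k))"
proof -
  obtain c where c: "B = (\<lambda>y z. \<Sum>i\<le>D. c i * assoc_mat cls i y z)"
    using assms by (auto simp: bose_mesner_def)
  have "B = (\<Sum>i\<le>D. mat_scale (c i) (assoc_mat cls i))"
    by (simp add: c fun_eq_iff sum_fun_apply mat_scale_def)
  also have "\<dots> \<in> Mat.span (E ` {..D})"
    by (intro Mat.span_sum Mat.span_scale) (auto intro: assoc_mat_in_span_E)
  finally obtain u where "B = (\<Sum>v\<in>E ` {..D}. mat_scale (u v) v)"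
    using Mat.span_finite[of "E ` {..D}"] by auto
  then have "B = (\<Sum>k\<le>D. mat_scale (u (E k)) (E k))"
    by (simp add: sum.reindex[OF E_inj])
  then show ?thesis by (rule exI[of _ "\<lambda>k. u (E k)"])
qed

lemma bose_mesner_mmult_E:
  assumes "B \<in> bose_mesner D cls" "j \<le> D"
  shows "\<exists>g. mmult B (E j) = mat_scale g (E j) \<and> mmult (E j) B = mat_scale g (E j)"
  using bose_mesner_expansion[OF assms(1)] mmult_E_expansion[OF assms(2)] by metis

lemma sum_E: "(\<Sum>k\<le>D. E k) = id_mat"
proof -
  obtain c where c: "id_mat = (\<Sum>k\<le>D. mat_scale (c k) (E k))"
    using bose_mesner_expansion[OF assoc_mat_in_bose_mesner[of 0]] assoc_mat_0 by auto
  have "mat_scale (c j) (E j) = mat_scale 1 (E j)" if j: "j \<le> D" for j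
    using mmult_E_expansion(1)[OF j, of c] c by (simp add: mat_scale_def)
  then have "c j = 1" if "j \<le> D" for j
    using that mat_scale_cancel E_nonzero by blast
  then show ?thesis
    using c by (simp add: mat_scale_def)
qed

lemma sum_mvec_E: "(\<Sum>k\<le>D. mvec (E k) u) = u"
proof -
  have "(\<Sum>k\<le>D. mvec (E k) u) = mvec (\<Sum>k\<le>D. E k) u"
    by (simp add: mvec_def fun_eq_iff sum_fun_apply sum_distrib_right sum.swap[of _ "{..D}"])
  then show ?thesis
    by (simp add: sum_E mvec_def id_mat_def)
qed

lemma conj_E_in_bose_mesner:
  assumes "i \<le> D"
  shows "conj_mat (E i) \<in> bose_mesner D cls"
proof -
  obtain c where "E i = (\<lambda>y z. \<Sum>l\<le>D. c l * assoc_mat cls l y z)"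
    using E_in_bose_mesner[OF assms] by (auto simp: bose_mesner_def)
  then have "conj_mat (E i) = (\<lambda>y z. \<Sum>l\<le>D. cnj (c l) * assoc_mat cls l y z)"
    by (simp add: conj_mat_def fun_eq_iff assoc_mat_def)
  then show ?thesis
    by (auto simp: bose_mesner_def)
qed

lemma mmult_conj_E_diag:
  assumes i: "i \<le> D"
  shows "mmult (conj_mat (E i)) (E i) y y = of_real (\<Sum>w\<in>UNIV. (cmod (E i y w))\<^sup>2)"
  unfolding mmult_def conj_mat_def of_real_sum
proof (intro sum.cong refl)
  fix w
  have "E i w y = E i y w"
    by (rule E_sym[OF i])
  then show "cnj (E i y w) * E i w y = of_real ((cmod (E i y w))\<^sup>2)"
    using complex_norm_square[of "E i y w"] by (simp add: mult.commute)
qed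

text \<open>The diagonal entries of \<open>conj (E i) E i\<close> are row norms of \<open>E i\<close>, so this product
  is a nonzero multiple of the idempotent \<open>E i\<close>; idempotence forces the multiple to be \<open>1\<close>.\<close>
lemma mmult_conj_E_E: 
  assumes i: "i \<le> D"
  shows "mmult (conj_mat (E i)) (E i) = E i"
proof -
  obtain g where g: "mmult (conj_mat (E i)) (E i) = mat_scale g (E i)"
    using bose_mesner_mmult_E[OF conj_E_in_bose_mesner[OF i] i] by auto
  obtain y z where yz: "E i y z \<noteq> 0"
    using E_nonzero[OF i] by (auto simp: fun_eq_iff)
  have "(\<Sum>w\<in>UNIV. (cmod (E i y w))\<^sup>2) \<noteq> 0"
    using yz by (subst sum_nonneg_eq_0_iff) auto
  then have "mmult (conj_mat (E i)) (E i) \<noteq> 0"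
    using mmult_conj_E_diag[OF i, of y] of_real_eq_0_iff by (metis zero_fun_apply)
  then have "g \<noteq> 0"
    using g by (auto simp: mat_scale_def fun_eq_iff)
  have "mat_scale (g * g) (E i) = mmult (conj_mat (E i)) (mat_scale g (E i))"
    by (simp only: mmult_scale_right g) (simp add: mat_scale_def mult.assoc)
  also have "\<dots> = mmult (mmult (conj_mat (E i)) (conj_mat (E i))) (E i)"
    by (simp add: g mmult_assoc)
  also have "\<dots> = mat_scale g (E i)"
    using g mmult_E_E[OF i i] by (simp add: conj_mat_mmult)
  finally have "g * g = g"
    using mat_scale_cancel E_nonzero[OF i] by blast
  with \<open>g \<noteq> 0\<close> have "g = 1"
    by simp
  with g show ?thesis
    by (simp add: mat_scale_def)
qed

lemma E_real: 
  assumes i: "i \<le> D"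
  shows "cnj (E i y z) = E i y z"
proof -
  have "mmult (conj_mat (E i)) (E k) = (if k = i then E i else 0)" if k: "k \<le> D" for k
  proof (cases "k = i")
    case False
    have "mmult (conj_mat (E i)) (E k) = mmult (mmult (conj_mat (E i)) (conj_mat (E k))) (E k)"
      by (simp add: mmult_assoc mmult_conj_E_E[OF k])
    also have "\<dots> = 0"
      using False i k by (simp only: conj_mat_mmult mmult_E_E) simp
    finally show ?thesis using False by simp
  qed (simp add: mmult_conj_E_E i)
  then have "mmult (conj_mat (E i)) (\<Sum>k\<le>D. E k) = E i"
    using i by (simp add: mmult_sum_right)
  then have "conj_mat (E i) = E i"
    by (simp add: sum_E)
  then show ?thesis
    by (metis conj_mat_def)
qed

lemma sum_E_E_entry:
  assumes "k \<le> D"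
  shows "(\<Sum>y\<in>UNIV. E k y w * E k y w') = E k w w'"
proof -
  have "(\<Sum>y\<in>UNIV. E k y w * E k y w') = mmult (E k) (E k) w w'"
    unfolding mmult_def using E_sym[OF assms, of _ w] by simp
  then show ?thesis
    using mmult_E_E[OF assms assms] by simp
qed

lemma sum_E_E_entry_rows:
  assumes "k \<le> D"
  shows "(\<Sum>y\<in>UNIV. E k w y * E k w' y) = E k w w'"
proof -
  have "(\<Sum>y\<in>UNIV. E k w y * E k w' y) = (\<Sum>y\<in>UNIV. E k y w * E k y w')"
    by (intro sum.cong refl) (simp only: E_sym[OF assms, of w] E_sym[OF assms, of w'])
  then show ?thesis
    using sum_E_E_entry[OF assms] by simp
qed

lemma sum_hadamard_E_E:
  assumes "k \<le> D" "j \<le> D" "k \<noteq> j"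
  shows "(\<Sum>w\<in>UNIV. \<Sum>w'\<in>UNIV. E k w w' * E j w w') = 0"
proof -
  have "(\<Sum>w\<in>UNIV. \<Sum>w'\<in>UNIV. E k w w' * E j w w') = (\<Sum>w\<in>UNIV. mmult (E k) (E j) w w)"
    unfolding mmult_def
  proof (intro sum.cong refl)
    fix w w'
    show "E k w w' * E j w w' = E k w w' * E j w' w"
      using E_sym[OF assms(2), of w w'] by simp
  qed
  then show ?thesis
    using mmult_E_E[OF assms(1,2)] assms(3) by simp
qed

lemma lowest_level_exists:
  assumes "v \<noteq> 0"
  obtains m where "m \<le> D" "mvec (E m) v \<noteq> 0" "\<forall>k<m. mvec (E k) v = 0"
proof -
  have "\<exists>m. m \<le> D \<and> mvec (E m) v \<noteq> 0"
  proof (rule ccontr)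
    assume "\<nexists>m. m \<le> D \<and> mvec (E m) v \<noteq> 0"
    then have "(\<Sum>k\<le>D. mvec (E k) v) = 0"
      by (intro sum.neutral) auto
    with assms show False
      by (simp add: sum_mvec_E)
  qed
  then obtain m where "m \<le> D \<and> mvec (E m) v \<noteq> 0" "\<forall>k<m. \<not> (k \<le> D \<and> mvec (E k) v \<noteq> 0)"
    using exists_least_iff[of "\<lambda>m. m \<le> D \<and> mvec (E m) v \<noteq> 0"] by blast
  then show ?thesis
    using that by auto
qed

end

section \<open>Cometric schemes and the Krein condition\<close>

lemma sum3_self_mult_eq_0:
  fixes f :: "'a::finite \<Rightarrow> 'b::finite \<Rightarrow> 'c::finite \<Rightarrow> complex"
  assumes real: "\<And>a b c. cnj (f a b c) = f a b c"
    and sum: "(\<Sum>a\<in>UNIV. \<Sum>b\<in>UNIV. \<Sum>c\<in>UNIV. f a b c * f a b c) = 0"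
  shows "f a b c = 0"
proof -
  define g where "g a b c = Re (f a b c)" for a b c
  have f: "f a b c = of_real (g a b c)" for a b c
    using real[of a b c] by (simp add: g_def complex_eq_iff)
  then have "(\<Sum>a\<in>UNIV. \<Sum>b\<in>UNIV. \<Sum>c\<in>UNIV. f a b c * f a b c)
      = of_real (\<Sum>a\<in>UNIV. \<Sum>b\<in>UNIV. \<Sum>c\<in>UNIV. (g a b c)\<^sup>2)"
    by (simp add: power2_eq_square)
  with sum have sum_g: "(\<Sum>a\<in>UNIV. \<Sum>b\<in>UNIV. \<Sum>c\<in>UNIV. (g a b c)\<^sup>2) = 0"
    by (simp only: of_real_eq_0_iff)
  have nonneg: "0 \<le> (\<Sum>c\<in>UNIV. (g a b c)\<^sup>2)" "0 \<le> (\<Sum>b\<in>UNIV. \<Sum>c\<in>UNIV. (g a b c)\<^sup>2)"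
    for a b by (simp_all add: sum_nonneg)
  have "(\<Sum>b\<in>UNIV. \<Sum>c\<in>UNIV. (g a b c)\<^sup>2) = 0"
    using sum_g nonneg(2) by (simp add: sum_nonneg_eq_0_iff)
  then have "(\<Sum>c\<in>UNIV. (g a b c)\<^sup>2) = 0"
    using nonneg(1) by (simp add: sum_nonneg_eq_0_iff)
  then have "g a b c = 0"
    by (simp add: sum_nonneg_eq_0_iff)
  then show ?thesis
    by (simp add: f)
qed

lemma sum_rotate3:
  "(\<Sum>a\<in>A. \<Sum>b\<in>B. \<Sum>c\<in>C. F a b c) = (\<Sum>b\<in>B. \<Sum>c\<in>C. \<Sum>a\<in>A. F a b c)"
  by (simp only: sum.swap[of _ A])

lemma sum_product3:
  "(\<Sum>a\<in>A. \<Sum>b\<in>B. \<Sum>c\<in>C. f a * g b * h c) = sum f A * sum g B * (sum h C :: 'a::comm_semiring_0)"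
  by (simp only: sum_distrib_left[symmetric] sum_distrib_right[symmetric])

locale cometric_scheme = sym_scheme +
  assumes cometric: "cometric D E"
begin

definition cometric_poly :: "nat \<Rightarrow> complex poly" where
  "cometric_poly j = (SOME p. degree p = j \<and> E j = (\<lambda>y z. poly p (E 1 y z)))"

lemma cometric_poly:
  assumes "j \<le> D"
  shows "degree (cometric_poly j) = j" and "E j = (\<lambda>y z. poly (cometric_poly j) (E 1 y z))"
proof -
  have "\<exists>p. degree p = j \<and> E j = (\<lambda>y z. poly p (E 1 y z))"
    using cometric assms by (simp add: cometric_def)
  then have "degree (cometric_poly j) = j \<and> E j = (\<lambda>y z. poly (cometric_poly j) (E 1 y z))"
    unfolding cometric_poly_def by (rule someI_ex)
  then show "degree (cometric_poly j) = j" and "E j = (\<lambda>y z. poly (cometric_poly j) (E 1 y z))"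
    by blast+
qed

lemma E_eq_poly_E1: "j \<le> D \<Longrightarrow> E j y z = poly (cometric_poly j) (E 1 y z)"
  using cometric_poly(2) by metis

lemma lead_coeff_cometric_poly:
  assumes "j \<le> D"
  shows "lead_coeff (cometric_poly j) \<noteq> 0"
proof
  assume "lead_coeff (cometric_poly j) = 0"
  then have "E j = 0"
    using cometric_poly(2)[OF assms] by (simp add: fun_eq_iff)
  with E_nonzero[OF assms] show False ..
qed

lemma poly_in_span_cometric_polys:
  "n \<le> D \<Longrightarrow> degree q \<le> n \<Longrightarrow> \<exists>c. \<forall>z. poly q z = (\<Sum>j\<le>n. c j * poly (cometric_poly j) z)"
proof (induction n arbitrary: q)
  case 0
  let ?p = "cometric_poly 0"
  have q: "q = [:coeff q 0:]" and p: "?p = [:coeff ?p 0:]"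
    using 0 cometric_poly(1)[of 0] by (simp_all add: degree_0_id[symmetric])
  have "coeff ?p 0 \<noteq> 0"
    using lead_coeff_cometric_poly[of 0] cometric_poly(1)[of 0] by simp
  then have "poly q z = coeff q 0 / coeff ?p 0 * poly ?p z" for z
    by (subst q, subst p) simp
  then show ?case
    by (intro exI[of _ "\<lambda>_. coeff q 0 / coeff ?p 0"]) simp
next
  case (Suc n)
  let ?p = "cometric_poly (Suc n)"
  have deg_p: "degree ?p = Suc n" and lc: "coeff ?p (Suc n) \<noteq> 0"
    using cometric_poly(1) lead_coeff_cometric_poly Suc.prems(1) by metis+
  define a where "a = coeff q (Suc n) / coeff ?p (Suc n)"
  have "degree (q - smult a ?p) \<le> n"
  proof (rule degree_le, intro allI impI)
    fix i assume "n < i"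
    then consider "i = Suc n" | "Suc n < i" by linarith
    then show "coeff (q - smult a ?p) i = 0"
    proof cases
      case 2
      then show ?thesis using Suc.prems(2) deg_p by (simp add: coeff_eq_0)
    qed (use lc in \<open>simp add: a_def\<close>)
  qed
  then obtain c where c: "\<forall>z. poly (q - smult a ?p) z = (\<Sum>j\<le>n. c j * poly (cometric_poly j) z)"
    using Suc.IH Suc.prems(1) by fastforce
  show ?case
  proof (intro exI[of _ "c(Suc n := a)"] allI)
    fix z
    have "poly q z = poly (q - smult a ?p) z + a * poly ?p z"
      by simp
    also have "\<dots> = (\<Sum>j\<le>Suc n. (c(Suc n := a)) j * poly (cometric_poly j) z)"
      using c by simp
    finally show "poly q z = (\<Sum>j\<le>Suc n. (c(Suc n := a)) j * poly (cometric_poly j) z)" .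
  qed
qed

text \<open>Entrywise, \<open>E l \<circ> E 1\<close> is a polynomial of degree \<open>l + 1\<close> in \<open>E 1\<close>, hence a
  combination of \<open>E 0, \<dots>, E (l + 1)\<close>, all orthogonal to \<open>E k\<close>.\<close>
lemma krein_sum_eq_0_lt:
  assumes k: "k \<le> D" and lk: "l + 1 < k"
  shows "(\<Sum>w\<in>UNIV. \<Sum>w'\<in>UNIV. E k w w' * E l w w' * E 1 w w') = 0"
proof -
  have "degree (cometric_poly l * [:0, 1:]) \<le> l + 1"
    using degree_mult_le[of "cometric_poly l" "[:0,1:]"] cometric_poly(1)[of l] k lk by simp
  then obtain c where c: "\<forall>z. poly (cometric_poly l * [:0, 1:]) z = (\<Sum>j\<le>l+1. c j * poly (cometric_poly j) z)"
    using poly_in_span_cometric_polys[of "l + 1"] k lk by fastforce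
  have E_l_E_1: "E l w w' * E 1 w w' = (\<Sum>j\<le>l+1. c j * E j w w')" for w w'
  proof -
    have "E l w w' * E 1 w w' = poly (cometric_poly l * [:0, 1:]) (E 1 w w')"
      using E_eq_poly_E1[of l w w'] k lk by simp
    also have "\<dots> = (\<Sum>j\<le>l+1. c j * poly (cometric_poly j) (E 1 w w'))"
      using c by simp
    also have "\<dots> = (\<Sum>j\<le>l+1. c j * E j w w')"
    proof (intro sum.cong refl)
      fix j assume "j \<in> {..l+1}"
      then have "j \<le> D" using k lk by simp
      then show "c j * poly (cometric_poly j) (E 1 w w') = c j * E j w w'"
        by (simp only: E_eq_poly_E1[of j w w'])
    qed
    finally show ?thesis .
  qed
  have "(\<Sum>w\<in>UNIV. \<Sum>w'\<in>UNIV. E k w w' * E l w w' * E 1 w w')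
      = (\<Sum>w\<in>UNIV. \<Sum>w'\<in>UNIV. \<Sum>j\<le>l+1. c j * (E k w w' * E j w w'))"
    by (intro sum.cong refl) (simp only: mult.assoc E_l_E_1 sum_distrib_left mult.left_commute)
  also have "\<dots> = (\<Sum>j\<le>l+1. c j * (\<Sum>w\<in>UNIV. \<Sum>w'\<in>UNIV. E k w w' * E j w w'))"
    by (simp only: sum.swap[of _ UNIV "{..l+1}"] sum_distrib_left)
  also have "\<dots> = 0"
    using sum_hadamard_E_E k lk by (intro sum.neutral) auto
  finally show ?thesis .
qed

lemma krein_sum_eq_0:
  assumes "k \<le> D" "l \<le> D" "l + 1 < k \<or> k + 1 < l"
  shows "(\<Sum>w\<in>UNIV. \<Sum>w'\<in>UNIV. E k w w' * E l w w' * E 1 w w') = 0"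
  using assms krein_sum_eq_0_lt[of k l] krein_sum_eq_0_lt[of l k] by (auto simp: mult_ac)

lemma sum_squares_E_diag_E1_E:
  assumes k: "k \<le> D" and l: "l \<le> D" and D1: "1 \<le> D"
  shows "(\<Sum>x\<in>UNIV. \<Sum>y\<in>UNIV. \<Sum>z\<in>UNIV.
      (\<Sum>w\<in>UNIV. E k y w * E 1 w x * E l w z) * (\<Sum>w\<in>UNIV. E k y w * E 1 w x * E l w z))
    = (\<Sum>w\<in>UNIV. \<Sum>w'\<in>UNIV. E k w w' * E l w w' * E 1 w w')"
proof -
  have "(\<Sum>x\<in>UNIV. \<Sum>y\<in>UNIV. \<Sum>z\<in>UNIV.
      (\<Sum>w\<in>UNIV. E k y w * E 1 w x * E l w z) * (\<Sum>w\<in>UNIV. E k y w * E 1 w x * E l w z))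
     = (\<Sum>x\<in>UNIV. \<Sum>y\<in>UNIV. \<Sum>z\<in>UNIV. \<Sum>w\<in>UNIV. \<Sum>w'\<in>UNIV.
          (E k y w * E 1 w x * E l w z) * (E k y w' * E 1 w' x * E l w' z))"
    by (simp add: sum_product)
  also have "\<dots> = (\<Sum>x\<in>UNIV. \<Sum>y\<in>UNIV. \<Sum>w\<in>UNIV. \<Sum>w'\<in>UNIV. \<Sum>z\<in>UNIV.
          (E k y w * E 1 w x * E l w z) * (E k y w' * E 1 w' x * E l w' z))"
    by (rule sum.cong[OF refl], rule sum.cong[OF refl], rule sum_rotate3)
  also have "\<dots> = (\<Sum>x\<in>UNIV. \<Sum>w\<in>UNIV. \<Sum>w'\<in>UNIV. \<Sum>y\<in>UNIV. \<Sum>z\<in>UNIV.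
          (E k y w * E 1 w x * E l w z) * (E k y w' * E 1 w' x * E l w' z))"
    by (rule sum.cong[OF refl], rule sum_rotate3)
  also have "\<dots> = (\<Sum>w\<in>UNIV. \<Sum>w'\<in>UNIV. \<Sum>x\<in>UNIV. \<Sum>y\<in>UNIV. \<Sum>z\<in>UNIV.
          (E 1 w x * E 1 w' x) * (E k y w * E k y w') * (E l w z * E l w' z))"
    by (rule trans[OF sum_rotate3], intro sum.cong refl) (simp add: mult_ac)
  also have "\<dots> = (\<Sum>w\<in>UNIV. \<Sum>w'\<in>UNIV. (\<Sum>x\<in>UNIV. E 1 w x * E 1 w' x) *
          (\<Sum>y\<in>UNIV. E k y w * E k y w') * (\<Sum>z\<in>UNIV. E l w z * E l w' z))"
    by (intro sum.cong refl) (rule sum_product3)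
  also have "\<dots> = (\<Sum>w\<in>UNIV. \<Sum>w'\<in>UNIV. E k w w' * E l w w' * E 1 w w')"
    unfolding sum_E_E_entry_rows[OF D1] sum_E_E_entry[OF k] sum_E_E_entry_rows[OF l]
    by (simp only: mult_ac)
  finally show ?thesis .
qed

text \<open>The sum below is real, and the sum of its squares over \<open>x, y, z\<close> is the vanishing
  sum of \<open>krein_sum_eq_0\<close>.\<close>
lemma E_diag_E1_E_eq_0:
  assumes k: "k \<le> D" and l: "l \<le> D" and kl: "l + 1 < k \<or> k + 1 < l"
  shows "(\<Sum>w\<in>UNIV. E k y w * E 1 w x * E l w z) = 0"
proof -
  have D1: "1 \<le> D"
    using k l kl by auto
  define L where "L x y z = (\<Sum>w\<in>UNIV. E k y w * E 1 w x * E l w z)" for x y z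
  have "(\<Sum>x\<in>UNIV. \<Sum>y\<in>UNIV. \<Sum>z\<in>UNIV. L x y z * L x y z) = 0"
    unfolding L_def sum_squares_E_diag_E1_E[OF k l D1] using krein_sum_eq_0[OF k l kl] .
  moreover have "cnj (L x y z) = L x y z" for x y z
    using E_real[OF k] E_real[OF l] E_real[OF D1] by (simp add: L_def)
  ultimately show ?thesis
    using sum3_self_mult_eq_0[of L] by (simp add: L_def)
qed

text \<open>In a cometric scheme the column \<open>E 1 x\<close> separates the spheres around \<open>x\<close>: the
  \<open>E k x\<close> are polynomials in it, and they determine every \<open>A i x\<close>.\<close>
lemma E1_eq_imp_cls_eq:
  assumes "E 1 x y = E 1 x z"
  shows "cls x y = cls x z"
proof (rule ccontr)
  assume ne: "cls x y \<noteq> cls x z"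
  obtain c where c: "assoc_mat cls (cls x y) = (\<Sum>k\<le>D. mat_scale (c k) (E k))"
    using bose_mesner_expansion[OF assoc_mat_in_bose_mesner[OF cls_le]] by blast
  have "E k x y = E k x z" if "k \<le> D" for k
    using E_eq_poly_E1[OF that, of x y] E_eq_poly_E1[OF that, of x z] assms by simp
  then have "(\<Sum>k\<le>D. mat_scale (c k) (E k)) x y = (\<Sum>k\<le>D. mat_scale (c k) (E k)) x z"
    by (simp add: sum_fun_apply mat_scale_def)
  with ne show False
    by (simp flip: c add: assoc_mat_def)
qed

end

section \<open>Modules of the Terwilliger algebra\<close>

locale terwilliger = cometric_scheme D cls E
  for D and cls :: "'x::finite \<Rightarrow> 'x \<Rightarrow> nat" and E +
  fixes x :: 'x
  assumes D_pos: "1 \<le> D"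
begin

abbreviation T :: "'x mat set" where
  "T \<equiv> terw_alg D cls E x"

text \<open>\<open>A\<^sup>*\<^sub>1 x\<close> is \<open>|X|\<close> times the diagonal matrix of \<open>theta\<close>, so its action is
  pointwise multiplication by \<open>theta\<close> up to that factor.\<close>
definition theta :: "'x vec" where
  "theta = (\<lambda>y. E 1 x y)"

lemma E_theta_E_eq_0:
  assumes "k \<le> D" "l \<le> D" "l + 1 < k \<or> k + 1 < l"
  shows "mvec (E k) (theta * mvec (E l) u) = 0"
proof
  fix y
  have "mvec (E k) (theta * mvec (E l) u) y
      = (\<Sum>w\<in>UNIV. \<Sum>z\<in>UNIV. E k y w * E 1 w x * E l w z * u z)"
    unfolding mvec_def theta_def times_fun_apply sum_distrib_left
  proof (intro sum.cong refl)
    fix w z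
    show "E k y w * (E 1 x w * (E l w z * u z)) = E k y w * E 1 w x * E l w z * u z"
      using E_sym[OF D_pos, of x w] by (simp only: mult.assoc)
  qed
  also have "\<dots> = (\<Sum>z\<in>UNIV. \<Sum>w\<in>UNIV. E k y w * E 1 w x * E l w z * u z)"
    by (rule sum.swap)
  also have "\<dots> = (\<Sum>z\<in>UNIV. (\<Sum>w\<in>UNIV. E k y w * E 1 w x * E l w z) * u z)"
    by (simp only: sum_distrib_right)
  also have "\<dots> = 0"
    using E_diag_E1_E_eq_0[OF assms] by simp
  finally show "mvec (E k) (theta * mvec (E l) u) y = 0 y"
    by simp
qed

lemma bose_mesner_subset_T:
  assumes "B \<in> bose_mesner D cls"
  shows "B \<in> T"
proof -
  obtain c where c: "B = (\<lambda>y z. \<Sum>i\<le>D. c i * assoc_mat cls i y z)"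
    using assms by (auto simp: bose_mesner_def)
  have "(\<lambda>y z. \<Sum>i\<le>n. c i * assoc_mat cls i y z) \<in> T" if "n \<le> D" for n
    using that
  proof (induction n)
    case 0
    then show ?case
      by (simp add: terw_alg.smult terw_alg.gen_A)
  next
    case (Suc n)
    then show ?case
      using terw_alg.add[OF Suc.IH terw_alg.smult[OF terw_alg.gen_A[of "Suc n"]]] by simp
  qed
  then show ?thesis
    using c by simp
qed

lemma E_in_T: "k \<le> D \<Longrightarrow> E k \<in> T"
  using bose_mesner_subset_T E_in_bose_mesner by blast

lemma module_intro:
  assumes U: "Vec.subspace U"
    and A: "\<And>i w. i \<le> D \<Longrightarrow> w \<in> U \<Longrightarrow> mvec (assoc_mat cls i) w \<in> U"
    and A_dual: "\<And>i w. i \<le> D \<Longrightarrow> w \<in> U \<Longrightarrow> mvec (dual_adj E i x) w \<in> U"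
  shows "is_module T U"
proof -
  have "\<forall>w\<in>U. mvec F w \<in> U" if "F \<in> T" for F
    using that
  proof (induction rule: terw_alg.induct)
    case (add A B)
    show ?case
    proof
      fix w assume "w \<in> U"
      then have "mvec A w + mvec B w \<in> U"
        using add.IH Vec.subspace_add[OF U] by blast
      then show "mvec (\<lambda>y z. A y z + B y z) w \<in> U"
        by (simp only: mvec_mat_add)
    qed
  next
    case (smult A c)
    show ?case
    proof
      fix w assume "w \<in> U"
      then have "vec_scale c (mvec A w) \<in> U"
        using smult.IH Vec.subspace_scale[OF U] by blast
      then show "mvec (\<lambda>y z. c * A y z) w \<in> U"
        by (simp only: mvec_mat_scale[unfolded mat_scale_def])
    qed
  qed (simp_all add: A A_dual mvec_mmult)
  then show ?thesis
    using U by (simp add: is_module_iff)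
qed

lemma mvec_dual_adj: "mvec (dual_adj E i x) w = vec_scale (of_nat (card (UNIV :: 'x set))) ((\<lambda>y. E i x y) * w)"
  by (simp add: mvec_def dual_adj_def vec_scale_def fun_eq_iff mult.assoc)

lemma module_theta_mult:
  assumes U: "is_module T U" and w: "w \<in> U"
  shows "theta * w \<in> U"
proof -
  have "mvec (dual_adj E 1 x) w \<in> U"
    using U w D_pos by (simp add: is_module_def terw_alg.gen_Astar)
  then have "vec_scale (1 / of_nat (card (UNIV :: 'x set))) (mvec (dual_adj E 1 x) w) \<in> U"
    using U by (simp add: is_module_iff Vec.subspace_scale)
  moreover have "vec_scale (1 / of_nat (card (UNIV :: 'x set))) (mvec (dual_adj E 1 x) w) = theta * w"
    by (simp add: mvec_dual_adj vec_scale_def theta_def fun_eq_iff)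
  ultimately show ?thesis
    by simp
qed

lemma subspace_poly_theta_mult:
  assumes U: "Vec.subspace U" and theta_mult: "\<And>w. w \<in> U \<Longrightarrow> theta * w \<in> U"
  shows "w \<in> U \<Longrightarrow> (\<lambda>y. poly q (E 1 x y)) * w \<in> U"
proof (induction q arbitrary: w)
  case 0
  have "(\<lambda>y. poly 0 (E 1 x y)) * w = 0"
    by (simp add: fun_eq_iff)
  then show ?case
    using Vec.subspace_0[OF U] by (simp only:)
next
  case (pCons a p)
  have "theta * ((\<lambda>y. poly p (E 1 x y)) * w) \<in> U"
    using theta_mult pCons.IH[OF pCons.prems] .
  moreover have "vec_scale a w \<in> U"
    using Vec.subspace_scale[OF U pCons.prems] .
  moreover have "(\<lambda>y. poly (pCons a p) (E 1 x y)) * w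
      = vec_scale a w + theta * ((\<lambda>y. poly p (E 1 x y)) * w)"
    by (simp add: vec_scale_def theta_def fun_eq_iff algebra_simps)
  ultimately show ?case
    using Vec.subspace_add[OF U] by metis
qed

lemma module_intro_theta:
  assumes U: "Vec.subspace U"
    and A: "\<And>i w. i \<le> D \<Longrightarrow> w \<in> U \<Longrightarrow> mvec (assoc_mat cls i) w \<in> U"
    and theta_mult: "\<And>w. w \<in> U \<Longrightarrow> theta * w \<in> U"
  shows "is_module T U"
proof (rule module_intro[OF U A])
  fix i w assume i: "i \<le> D" and w: "w \<in> U"
  have "(\<lambda>y. E i x y) = (\<lambda>y. poly (cometric_poly i) (E 1 x y))"
    using E_eq_poly_E1[OF i] by simp
  then show "mvec (dual_adj E i x) w \<in> U"
    using subspace_poly_theta_mult[OF U theta_mult w] U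
    by (simp add: mvec_dual_adj Vec.subspace_scale)
qed

lemma mat_adjoint_in_T: "F \<in> T \<Longrightarrow> mat_adjoint F \<in> T"
proof (induction rule: terw_alg.induct)
  case (gen_A i)
  have "mat_adjoint (assoc_mat cls i) = assoc_mat cls i"
    by (simp add: mat_adjoint_def assoc_mat_def fun_eq_iff cls_sym)
  then show ?case
    using terw_alg.gen_A[OF gen_A] by simp
next
  case (gen_Astar i)
  have "mat_adjoint (dual_adj E i x) = dual_adj E i x"
    using gen_Astar by (auto simp: mat_adjoint_def dual_adj_def fun_eq_iff E_real)
  then show ?case
    using terw_alg.gen_Astar[OF gen_Astar] by simp
next
  case (add A B)
  then show ?case
    using terw_alg.add[OF add.IH] by (simp add: mat_adjoint_def)
next
  case (smult A c)
  then show ?case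
    using terw_alg.smult[OF smult.IH, of "cnj c"] by (simp add: mat_adjoint_def)
next
  case (mult A B)
  then show ?case
    using terw_alg.mult[OF mult.IH(2,1)] by (simp add: mat_adjoint_mmult)
qed

lemma module_orth_compl:
  assumes U: "is_module T U"
  shows "is_module T (orth_compl U)"
proof -
  have "mvec F b \<in> orth_compl U" if "F \<in> T" "b \<in> orth_compl U" for F b
  proof -
    have "mvec (mat_adjoint F) u \<in> U" if "u \<in> U" for u
      using U mat_adjoint_in_T \<open>F \<in> T\<close> that by (simp add: is_module_def)
    then show ?thesis
      using \<open>b \<in> orth_compl U\<close> by (simp add: cinner_mvec orth_compl_def)
  qed
  then show ?thesis
    using subspace_orth_compl by (simp add: is_module_iff)
qed

lemma reducible_module_component:
  assumes U: "is_module T U" "\<not> irreducible_module T U" and u: "u \<in> U" "u \<noteq> 0"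
  shows "\<exists>U' a. is_module T U' \<and> U' \<subseteq> U \<and> Vec.dim U' < Vec.dim U \<and> a \<in> U' \<and> a \<noteq> 0
    \<and> u - a \<in> orth_compl U'"
proof -
  have sub_U: "Vec.subspace U"
    using U by (simp add: is_module_iff)
  obtain U1 where U1: "is_module T U1" "U1 \<subseteq> U" "U1 \<noteq> {0}" "U1 \<noteq> U"
    using U u unfolding irreducible_module_def by auto
  have sub_U1: "Vec.subspace U1"
    using U1(1) by (simp add: is_module_iff)
  obtain a where a: "a \<in> U1" "u - a \<in> orth_compl U1"
    using orth_proj_exists[OF sub_U1] by blast
  show ?thesis
  proof (cases "a = 0")
    case False
    have "Vec.dim U1 < Vec.dim U"
      using dim_psubset_subspace[OF sub_U1 sub_U] U1(2,4) by blast
    then show ?thesis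
      using U1(1,2) a False by blast
  next
    case True
    define U2 where "U2 = U \<inter> orth_compl U1"
    have U2: "is_module T U2"
      using U module_orth_compl[OF U1(1)] by (auto simp: U2_def is_module_iff Vec.subspace_inter)
    obtain w where "w \<in> U1" "w \<noteq> 0"
      using U1(3) Vec.subspace_0[OF sub_U1] by blast
    then have "w \<in> U - U2"
      using orth_compl_disjoint U1(2) by (auto simp: U2_def)
    then have "Vec.dim U2 < Vec.dim U"
      using dim_psubset_subspace[of U2 U] U2 sub_U by (auto simp: U2_def is_module_iff)
    moreover have "u \<in> U2" "u - u \<in> orth_compl U2"
      using u a True by (auto simp: U2_def orth_compl_def)
    moreover have "U2 \<subseteq> U"
      by (simp add: U2_def)
    ultimately show ?thesis
      using U2 u(2) by blast
  qed
qed

text \<open>Complete reducibility, available because \<open>T\<close> is closed under adjoints.\<close>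
lemma irreducible_component:
  assumes "is_module T U" "u \<in> U" "u \<noteq> 0"
  shows "\<exists>W v. irreducible_module T W \<and> W \<subseteq> U \<and> v \<in> W \<and> v \<noteq> 0 \<and> u - v \<in> orth_compl W"
  using assms
proof (induction "Vec.dim U" arbitrary: U u rule: less_induct)
  case less
  show ?case
  proof (cases "irreducible_module T U")
    case True
    have "u - u \<in> orth_compl U"
      by (simp add: orth_compl_def)
    then show ?thesis
      using True less.prems by blast
  next
    case False
    then obtain U' a where U': "is_module T U'" "U' \<subseteq> U" "Vec.dim U' < Vec.dim U"
        and a: "a \<in> U'" "a \<noteq> 0" "u - a \<in> orth_compl U'"
      using reducible_module_component less.prems by blast
    then obtain W v where W: "irreducible_module T W" "W \<subseteq> U'" "v \<in> W" "v \<noteq> 0"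
        "a - v \<in> orth_compl W"
      using less.hyps by blast
    have "u - a \<in> orth_compl W"
      using a(3) orth_compl_antimono[OF W(2)] by blast
    then have "(a - v) + (u - a) \<in> orth_compl W"
      using W(5) subspace_orth_compl Vec.subspace_add by blast
    then show ?thesis
      using W U'(2) by auto
  qed
qed

text \<open>Such a map sends \<open>v\<close> into \<open>W\<close> and \<open>\<chi> - v\<close> into the module \<open>orth_compl W\<close>.\<close>
lemma component_annihilated:
  assumes W: "is_module T W" and v: "v \<in> W" and chi_v: "\<chi> - v \<in> orth_compl W"
    and f_add: "\<And>a b. f (a + b) = f a + f b"
    and f_module: "\<And>U w. is_module T U \<Longrightarrow> w \<in> U \<Longrightarrow> f w \<in> U"
    and f_chi: "f \<chi> = 0"
  shows "f v = 0"
proof -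
  have "f v = - f (\<chi> - v)"
    using f_add[of v "\<chi> - v"] f_chi by (simp add: eq_neg_iff_add_eq_0)
  moreover have "f (\<chi> - v) \<in> orth_compl W"
    using f_module[OF module_orth_compl[OF W] chi_v] .
  ultimately have "f v \<in> orth_compl W"
    using Vec.subspace_neg[OF subspace_orth_compl] by simp
  moreover have "f v \<in> W"
    using f_module[OF W v] .
  ultimately show ?thesis
    using orth_compl_disjoint by blast
qed

section \<open>Lowering in dual thin modules\<close>

lemma E_theta_mult_expansion:
  "mvec (E k) (theta * u) = (\<Sum>l\<le>D. mvec (E k) (theta * mvec (E l) u))"
proof -
  have "theta * u = theta * (\<Sum>l\<le>D. mvec (E l) u)"
    using sum_mvec_E[of u] by simp
  then show ?thesis
    by (simp add: sum_distrib_left mvec_sum)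
qed

lemma E_theta_mult_eq_0:
  assumes k: "k \<le> D" "k + 1 < p" and below: "\<forall>l<p. mvec (E l) u = 0"
  shows "mvec (E k) (theta * u) = 0"
proof -
  have terms: "mvec (E k) (theta * mvec (E l) u) = 0" if l: "l \<in> {..D}" for l
  proof (cases "l < p")
    case True
    then show ?thesis using below by simp
  next
    case False
    then show ?thesis using E_theta_E_eq_0[of k l] k l by simp
  qed
  then show ?thesis
    unfolding E_theta_mult_expansion[of k u] by (intro sum.neutral) blast
qed

lemma E_theta_mult_lowering:
  assumes p: "1 \<le> p" "p \<le> D" and below: "\<forall>l<p. mvec (E l) u = 0"
  shows "mvec (E (p - 1)) (theta * u) = mvec (E (p - 1)) (theta * mvec (E p) u)"
proof -
  have "mvec (E (p - 1)) (theta * mvec (E l) u)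
      = (if l = p then mvec (E (p - 1)) (theta * mvec (E p) u) else 0)" if l: "l \<in> {..D}" for l
  proof -
    consider "l < p" | "l = p" | "p < l" by linarith
    then show ?thesis
    proof cases
      case 1
      then show ?thesis using below by simp
    next
      case 3
      then show ?thesis using E_theta_E_eq_0[of "p - 1" l u] p l by simp
    qed simp
  qed
  then have "mvec (E (p - 1)) (theta * u)
      = (\<Sum>l\<le>D. if l = p then mvec (E (p - 1)) (theta * mvec (E p) u) else 0)"
    unfolding E_theta_mult_expansion[of "p - 1" u] by (rule sum.cong[OF refl])
  then show ?thesis
    using p by simp
qed

lemma E_assoc_mat_eigen:
  assumes k: "k \<le> D" and i: "i \<le> D"
  shows "\<exists>g. mvec (E k) (mvec (assoc_mat cls i) w) = vec_scale g (mvec (E k) w)"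
proof -
  obtain g where "mmult (E k) (assoc_mat cls i) = mat_scale g (E k)"
    using bose_mesner_mmult_E[OF assoc_mat_in_bose_mesner[OF i] k] by blast
  then have "mvec (E k) (mvec (assoc_mat cls i) w) = vec_scale g (mvec (E k) w)"
    by (simp flip: mvec_mmult add: mvec_mat_scale)
  then show ?thesis ..
qed

lemma module_vanishing_below:
  assumes W: "is_module T W" and p: "p \<le> D"
    and lowering: "\<forall>w\<in>W. mvec (E (p - 1)) (theta * mvec (E p) w) = 0"
  shows "is_module T {w \<in> W. \<forall>k<p. mvec (E k) w = 0}"
proof (rule module_intro_theta)
  have "Vec.subspace W"
    using W by (simp add: is_module_iff)
  then show "Vec.subspace {w \<in> W. \<forall>k<p. mvec (E k) w = 0}"
    by (auto simp: Vec.subspace_def mvec_add mvec_scale)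
next
  fix i w assume i: "i \<le> D" and w: "w \<in> {w \<in> W. \<forall>k<p. mvec (E k) w = 0}"
  have "mvec (E k) (mvec (assoc_mat cls i) w) = 0" if "k < p" for k
    using E_assoc_mat_eigen[of k i w] i w that p by (auto simp: vec_scale_def fun_eq_iff)
  moreover have "mvec (assoc_mat cls i) w \<in> W"
    using W w i by (simp add: is_module_def terw_alg.gen_A)
  ultimately show "mvec (assoc_mat cls i) w \<in> {w \<in> W. \<forall>k<p. mvec (E k) w = 0}"
    by blast
next
  fix w assume w: "w \<in> {w \<in> W. \<forall>k<p. mvec (E k) w = 0}"
  have "mvec (E k) (theta * w) = 0" if k: "k < p" for k
  proof (cases "k + 1 < p")
    case True
    then show ?thesis using E_theta_mult_eq_0[of k p w] w p by simp
  next
    case False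
    then have "k = p - 1" "1 \<le> p" using k by auto
    then show ?thesis
      using E_theta_mult_lowering[of p w] lowering w p by simp
  qed
  moreover have "theta * w \<in> W"
    using module_theta_mult W w by blast
  ultimately show "theta * w \<in> {w \<in> W. \<forall>k<p. mvec (E k) w = 0}"
    by blast
qed

lemma lowering_nonzero:
  assumes irr: "irreducible_module T W" and thin: "dual_thin D E W"
    and p: "r < p" "p \<le> D" and w0: "w0 \<in> W" "mvec (E r) w0 \<noteq> 0"
    and u: "u \<in> W" "\<forall>k<p. mvec (E k) u = 0" "mvec (E p) u \<noteq> 0"
  shows "mvec (E (p - 1)) (theta * mvec (E p) u) \<noteq> 0"
proof
  assume lowering_u: "mvec (E (p - 1)) (theta * mvec (E p) u) = 0"
  have "\<forall>w\<in>W. mvec (E (p - 1)) (theta * mvec (E p) w) = 0"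
  proof
    fix w assume "w \<in> W"
    then obtain c where "mvec (E p) w = vec_scale c (mvec (E p) u)"
      using dual_thin_proportional[OF thin p(2) u(1,3)] by blast
    then show "mvec (E (p - 1)) (theta * mvec (E p) w) = 0"
      by (simp only: mult_vec_scale mvec_scale lowering_u Vec.scale_zero_right)
  qed
  moreover have "is_module T W"
    using irr by (simp add: irreducible_module_def)
  ultimately have "is_module T {w \<in> W. \<forall>k<p. mvec (E k) w = 0}"
    using module_vanishing_below p(2) by blast
  moreover have "{w \<in> W. \<forall>k<p. mvec (E k) w = 0} \<subseteq> W"
    by blast
  ultimately have "{w \<in> W. \<forall>k<p. mvec (E k) w = 0} = {0} \<or> {w \<in> W. \<forall>k<p. mvec (E k) w = 0} = W"
    using irr unfolding irreducible_module_def by simp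
  moreover have "u \<in> {w \<in> W. \<forall>k<p. mvec (E k) w = 0}" "u \<noteq> 0"
    using u by auto
  moreover have "w0 \<notin> {w \<in> W. \<forall>k<p. mvec (E k) w = 0}"
    using w0 p(1) by auto
  ultimately show False
    using w0(1) by blast
qed

lemma lowering_step:
  fixes \<theta> :: complex
  assumes irr: "irreducible_module T W" and thin: "dual_thin D E W"
    and p: "r < p" "p \<le> D" and w0: "w0 \<in> W" "mvec (E r) w0 \<noteq> 0"
    and u: "u \<in> W" "\<forall>k<p. mvec (E k) u = 0" "mvec (E p) u \<noteq> 0"
  defines "u' \<equiv> theta * u - vec_scale \<theta> u"
  shows "u' \<in> W" "\<forall>k<p - 1. mvec (E k) u' = 0" "mvec (E (p - 1)) u' \<noteq> 0"
proof -
  have W: "is_module T W"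
    using irr by (simp add: irreducible_module_def)
  show "u' \<in> W"
    using W module_theta_mult[OF W u(1)] u(1)
    by (auto simp: u'_def is_module_iff intro: Vec.subspace_diff Vec.subspace_scale)
  show "\<forall>k<p - 1. mvec (E k) u' = 0"
  proof (intro allI impI)
    fix k assume "k < p - 1"
    then have "k \<le> D" "k + 1 < p" "k < p"
      using p(2) by auto
    then show "mvec (E k) u' = 0"
      using E_theta_mult_eq_0[of k p u] u(2) by (simp add: u'_def mvec_diff mvec_scale)
  qed
  have "mvec (E (p - 1)) u' = mvec (E (p - 1)) (theta * mvec (E p) u)"
    using E_theta_mult_lowering[of p u] p u(2) by (simp add: u'_def mvec_diff mvec_scale)
  then show "mvec (E (p - 1)) u' \<noteq> 0"
    using lowering_nonzero[OF irr thin p w0 u] by simp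
qed

text \<open>The key estimate: each \<open>lowering_step\<close> removes one dual eigenvalue \<open>\<theta>\<close> from the
  support and lowers the bottom level by exactly one, which cannot go below the dual
  endpoint \<open>r\<close>.\<close>
lemma level_bound:
  assumes irr: "irreducible_module T W" and thin: "dual_thin D E W"
    and w0: "w0 \<in> W" "mvec (E r) w0 \<noteq> 0"
    and u: "finite \<Theta>" "u \<in> W" "\<forall>y. u y \<noteq> 0 \<longrightarrow> theta y \<in> \<Theta>"
      "\<forall>k<p. mvec (E k) u = 0" "mvec (E p) u \<noteq> 0" "p \<le> D"
  shows "p < r + card \<Theta>"
proof -
  have "\<forall>u p. u \<in> W \<longrightarrow> (\<forall>y. u y \<noteq> 0 \<longrightarrow> theta y \<in> \<Theta>) \<longrightarrow> (\<forall>k<p. mvec (E k) u = 0)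
      \<longrightarrow> mvec (E p) u \<noteq> 0 \<longrightarrow> p \<le> D \<longrightarrow> p < r + card \<Theta>"
    using u(1)
  proof (induction \<Theta> rule: finite_induct)
    case empty
    show ?case
    proof (intro allI impI)
      fix u :: "'x vec" and p
      assume "\<forall>y. u y \<noteq> 0 \<longrightarrow> theta y \<in> {}" "mvec (E p) u \<noteq> 0"
      moreover from this(1) have "u = 0"
        by (auto simp: fun_eq_iff)
      ultimately show "p < r + card {}"
        by simp
    qed
  next
    case (insert \<theta> F)
    show ?case
    proof (intro allI impI)
      fix u p
      assume u: "u \<in> W" "\<forall>y. u y \<noteq> 0 \<longrightarrow> theta y \<in> insert \<theta> F"
        "\<forall>k<p. mvec (E k) u = 0" "mvec (E p) u \<noteq> 0" "p \<le> D"
      show "p < r + card (insert \<theta> F)"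
      proof (cases "r < p")
        case True
        let ?u' = "theta * u - vec_scale \<theta> u"
        have "\<forall>y. ?u' y \<noteq> 0 \<longrightarrow> theta y \<in> F"
          using u(2) by (auto simp: vec_scale_def)
        then have "p - 1 < r + card F"
          using insert.IH[rule_format, of ?u' "p - 1"] u(5)
            lowering_step[OF irr thin True u(5) w0 u(1,3,4)] by simp
        then show ?thesis
          using insert.hyps by simp
      qed (use insert.hyps in simp)
    qed
  qed
  then show ?thesis
    using u by blast
qed

section \<open>Radial vectors and relative designs\<close>

definition radial :: "'x vec set" where
  "radial = {u. \<forall>y z. cls x y = cls x z \<longrightarrow> u y = u z}"

lemma radialI: "(\<And>y z. cls x y = cls x z \<Longrightarrow> u y = u z) \<Longrightarrow> u \<in> radial"
  unfolding radial_def by blast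

lemma radialD: "u \<in> radial \<Longrightarrow> cls x y = cls x z \<Longrightarrow> u y = u z"
  unfolding radial_def by blast

lemma radial_iff: "u \<in> radial \<longleftrightarrow> (\<exists>f. u = (\<lambda>y. f (cls x y)))"
proof
  assume u: "u \<in> radial"
  have rep: "u y = u (SOME z. cls x z = cls x y)" for y
  proof (rule radialD[OF u])
    show "cls x y = cls x (SOME z. cls x z = cls x y)"
      by (rule someI[of "\<lambda>z. cls x z = cls x y", symmetric]) (rule refl)
  qed
  show "\<exists>f. u = (\<lambda>y. f (cls x y))"
    by (intro exI[of _ "\<lambda>l. u (SOME z. cls x z = l)"] ext) (rule rep)
next
  assume "\<exists>f. u = (\<lambda>y. f (cls x y))"
  then obtain f where f: "u = (\<lambda>y. f (cls x y))" ..
  show "u \<in> radial"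
    by (rule radialI) (simp add: f)
qed

lemma subspace_radial: "Vec.subspace radial"
  unfolding Vec.subspace_def
proof (intro conjI ballI allI)
  show "0 \<in> radial"
    by (rule radialI) simp
  fix a b c assume a: "a \<in> radial" and b: "b \<in> radial"
  show "a + b \<in> radial"
  proof (rule radialI)
    fix y z assume yz: "cls x y = cls x z"
    show "(a + b) y = (a + b) z"
      using radialD[OF a yz] radialD[OF b yz] by simp
  qed
  show "vec_scale c a \<in> radial"
  proof (rule radialI)
    fix y z assume yz: "cls x y = cls x z"
    show "vec_scale c a y = vec_scale c a z"
      using radialD[OF a yz] by (simp add: vec_scale_def)
  qed
qed

lemma assoc_mat_radial:
  assumes "u \<in> radial"
  shows "mvec (assoc_mat cls i) u \<in> radial"
proof -
  obtain f where f: "u = (\<lambda>y. f (cls x y))"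
    using assms radial_iff by blast
  have entry: "mvec (assoc_mat cls i) u y
      = (\<Sum>l\<le>D. of_nat (card {z. cls y z = i \<and> cls z x = l}) * f l)" for y
  proof -
    have "mvec (assoc_mat cls i) u y = (\<Sum>z\<in>UNIV. \<Sum>l\<le>D. if cls y z = i \<and> cls z x = l then f l else 0)"
      unfolding mvec_def assoc_mat_def f
    proof (intro sum.cong refl)
      fix z
      have "cls x z = cls z x" "cls z x \<le> D"
        using cls_sym[of x z] cls_le[of z x] by simp_all
      then show "(if cls y z = i then 1 else 0) * f (cls x z)
          = (\<Sum>l\<le>D. if cls y z = i \<and> cls z x = l then f l else 0)"
        by (cases "cls y z = i") simp_all
    qed
    also have "\<dots> = (\<Sum>l\<le>D. \<Sum>z\<in>UNIV. if cls y z = i \<and> cls z x = l then f l else 0)"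
      by (rule sum.swap)
    also have "\<dots> = (\<Sum>l\<le>D. of_nat (card {z. cls y z = i \<and> cls z x = l}) * f l)"
      by (simp add: sum.If_cases)
    finally show ?thesis .
  qed
  have card_eq: "card {z. cls y z = i \<and> cls z x = l} = card {z. cls y' z = i \<and> cls z x = l}"
    if "cls x y = cls x y'" for y y' l
  proof -
    obtain n where n: "\<forall>a b. cls a b = cls y x \<longrightarrow> card {z. cls a z = i \<and> cls z b = l} = n"
      using intersection_number[of "cls y x" i l] by blast
    have "cls y' x = cls y x"
      using that cls_sym[of x y] cls_sym[of x y'] by simp
    then show ?thesis
      using n by simp
  qed
  show ?thesis
  proof (rule radialI)
    fix y z assume yz: "cls x y = cls x z"
    show "mvec (assoc_mat cls i) u y = mvec (assoc_mat cls i) u z"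
      unfolding entry by (intro sum.cong refl) (simp only: card_eq[OF yz])
  qed
qed

lemma theta_radial: "theta \<in> radial"
  unfolding theta_def by (intro radialI E_cong[OF D_pos])

lemma module_radial: "is_module T radial"
proof (rule module_intro_theta[OF subspace_radial])
  show "mvec (assoc_mat cls i) w \<in> radial" if "w \<in> radial" for i w
    using assoc_mat_radial that .
  show "theta * w \<in> radial" if w: "w \<in> radial" for w
  proof (rule radialI)
    fix y z assume yz: "cls x y = cls x z"
    show "(theta * w) y = (theta * w) z"
      using radialD[OF w yz] radialD[OF theta_radial yz] by simp
  qed
qed

lemma radial_expansion:
  assumes "u = (\<lambda>y. f (cls x y))"
  shows "u = (\<Sum>l\<le>D. vec_scale (f l) (mvec (assoc_mat cls l) (std_vec x)))"
proof
  fix y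
  have "mvec (assoc_mat cls l) (std_vec x) y = (if cls x y = l then 1 else 0)" for l
    using cls_sym[of y x] by (simp add: mvec_def assoc_mat_def std_vec_def)
  then show "u y = (\<Sum>l\<le>D. vec_scale (f l) (mvec (assoc_mat cls l) (std_vec x))) y"
    using cls_le[of x y] by (simp add: assms sum_fun_apply vec_scale_def)
qed

lemma E_radial:
  assumes u: "u \<in> radial" and j: "j \<le> D"
  shows "\<exists>c. mvec (E j) u = vec_scale c (mvec (E j) (std_vec x))"
proof -
  obtain f where "u = (\<lambda>y. f (cls x y))"
    using u radial_iff by blast
  then have u_eq: "u = (\<Sum>l\<le>D. vec_scale (f l) (mvec (assoc_mat cls l) (std_vec x)))"
    by (rule radial_expansion)
  have "\<forall>l\<in>{..D}. \<exists>g. mvec (E j) (mvec (assoc_mat cls l) (std_vec x)) = vec_scale g (mvec (E j) (std_vec x))"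
    using E_assoc_mat_eigen[OF j] by blast
  from bchoice[OF this] obtain g where
    g: "\<forall>l\<in>{..D}. mvec (E j) (mvec (assoc_mat cls l) (std_vec x)) = vec_scale (g l) (mvec (E j) (std_vec x))" ..
  have "mvec (E j) u = (\<Sum>l\<le>D. vec_scale (f l) (mvec (E j) (mvec (assoc_mat cls l) (std_vec x))))"
    by (subst u_eq) (simp add: mvec_sum mvec_scale)
  also have "\<dots> = (\<Sum>l\<le>D. vec_scale (f l * g l) (mvec (E j) (std_vec x)))"
    using g by (intro sum.cong refl) (simp add: Vec.scale_scale)
  also have "\<dots> = vec_scale (\<Sum>l\<le>D. f l * g l) (mvec (E j) (std_vec x))"
    by (rule Vec.scale_sum_left[symmetric])
  finally show ?thesis ..
qed

definition design_kernel :: "nat \<Rightarrow> 'x vec set" where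
  "design_kernel t = {u. \<forall>F\<in>T. \<forall>j. 1 \<le> j \<and> j \<le> t \<longrightarrow> mvec (E j) (mvec F u) = 0}"

lemma module_design_kernel: "is_module T (design_kernel t)"
  unfolding is_module_iff
proof (intro conjI ballI)
  show "Vec.subspace (design_kernel t)"
    unfolding Vec.subspace_def design_kernel_def by (simp add: mvec_add mvec_scale)
  fix F u assume F: "F \<in> T" and u: "u \<in> design_kernel t"
  have "mvec (E j) (mvec (mmult F' F) u) = 0" if "F' \<in> T" "1 \<le> j \<and> j \<le> t" for F' j
    using u terw_alg.mult[OF that(1) F] that(2) by (simp add: design_kernel_def)
  then show "mvec F u \<in> design_kernel t"
    by (simp add: design_kernel_def mvec_mmult)
qed

definition design_space :: "nat \<Rightarrow> 'x vec set" where
  "design_space t = {a + b | a b. a \<in> radial \<and> b \<in> design_kernel t}"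

lemma module_design_space: "is_module T (design_space t)"
  unfolding is_module_iff
proof
  show "Vec.subspace (design_space t)"
    unfolding design_space_def
    using module_design_kernel by (intro Vec.subspace_sums subspace_radial) (simp add: is_module_iff)
  show "\<forall>F\<in>T. \<forall>u\<in>design_space t. mvec F u \<in> design_space t"
  proof (intro ballI)
    fix F u assume F: "F \<in> T" and "u \<in> design_space t"
    then obtain a b where "u = a + b" "a \<in> radial" "b \<in> design_kernel t"
      unfolding design_space_def by blast
    moreover have "mvec F a \<in> radial" "mvec F b \<in> design_kernel t"
      using module_radial module_design_kernel F calculation(2,3) by (simp_all add: is_module_def)
    ultimately show "mvec F u \<in> design_space t"
      unfolding design_space_def by (auto simp: mvec_add)
  qed
qed

lemma radial_subset_design_space: "radial \<subseteq> design_space t"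
proof
  fix a assume "a \<in> radial"
  moreover have "0 \<in> design_kernel t"
    using module_design_kernel by (simp add: is_module_iff Vec.subspace_0)
  ultimately have "a + 0 \<in> design_space t"
    unfolding design_space_def by blast
  then show "a \<in> design_space t"
    by simp
qed

lemma design_kernel_subset_design_space: "design_kernel t \<subseteq> design_space t"
proof
  fix b assume "b \<in> design_kernel t"
  moreover have "0 \<in> radial"
    by (simp add: Vec.subspace_0 subspace_radial)
  ultimately have "0 + b \<in> design_space t"
    unfolding design_space_def by blast
  then show "b \<in> design_space t"
    by simp
qed

lemma relative_design_of_design_space:
  assumes "\<chi> \<in> design_space t" "t \<le> D" "F \<in> T"
  shows "relative_design E (mvec F \<chi>) x t"
  unfolding relative_design_def
proof (intro allI impI)
  fix j assume j: "1 \<le> j \<and> j \<le> t"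
  obtain a b where ab: "\<chi> = a + b" "a \<in> radial" "b \<in> design_kernel t"
    using assms(1) unfolding design_space_def by blast
  obtain c where c: "mvec (E j) (mvec F a) = vec_scale c (mvec (E j) (std_vec x))"
    using E_radial[of "mvec F a" j] module_radial ab(2) assms(2,3) j by (auto simp: is_module_def)
  have "mvec (E j) (mvec F b) = 0"
    using ab(3) assms(3) j by (simp add: design_kernel_def)
  then have "mvec (E j) (mvec F \<chi>) = vec_scale c (mvec (E j) (std_vec x))"
    by (simp add: ab(1) mvec_add c)
  then show "\<exists>a b. (a \<noteq> 0 \<or> b \<noteq> 0) \<and>
      (\<lambda>y. a * mvec (E j) (mvec F \<chi>) y + b * mvec (E j) (std_vec x) y) = zero_vec"
    by (intro exI[of _ 1] exI[of _ "- c"]) (simp add: vec_scale_def fun_eq_iff)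
qed

lemma irreducible_component_outside:
  assumes "\<chi> \<notin> design_space t"
  obtains W v where "irreducible_module T W" "W \<subseteq> orth_compl (design_space t)"
    "v \<in> W" "v \<noteq> 0" "\<chi> - v \<in> orth_compl W"
proof -
  have "Vec.subspace (design_space t)"
    using module_design_space by (simp add: is_module_iff)
  then obtain a where a: "a \<in> design_space t" "\<chi> - a \<in> orth_compl (design_space t)"
    using orth_proj_exists by blast
  moreover have "\<chi> - a \<noteq> 0"
    using assms a(1) by auto
  ultimately obtain W v where W: "irreducible_module T W" "W \<subseteq> orth_compl (design_space t)"
      "v \<in> W" "v \<noteq> 0" "(\<chi> - a) - v \<in> orth_compl W"
    using irreducible_component[OF module_orth_compl[OF module_design_space]] by blast
  have "a \<in> orth_compl W"
    using a(1) W(2) orth_compl_orthogonal unfolding orth_compl_def by blast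
  then have "a + ((\<chi> - a) - v) \<in> orth_compl W"
    using W(5) subspace_orth_compl Vec.subspace_add by blast
  then show ?thesis
    using that W(1-4) by simp
qed

lemma E0_vanishes_on_orth_design_space:
  assumes "W \<subseteq> orth_compl (design_space t)" "w \<in> W"
  shows "mvec (E 0) w = 0"
proof -
  have "(\<lambda>y. 1) \<in> radial"
    by (rule radialI) simp
  then have "cinner (\<lambda>y. 1) w = 0"
    using assms radial_subset_design_space orth_compl_orthogonal by blast
  then show ?thesis
    by (simp add: cinner_def mvec_def E_0 fun_eq_iff sum_divide_distrib[symmetric])
qed

lemma dual_endpoint_orth_design_space:
  assumes W: "irreducible_module T W" "W \<subseteq> orth_compl (design_space t)"
    and v: "v \<in> W" "v \<noteq> 0" and t: "t \<le> D"
  shows "1 \<le> dual_endpoint D E W" "dual_endpoint D E W \<le> t" "dual_endpoint D E W \<le> D"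
    "\<exists>w\<in>W. mvec (E (dual_endpoint D E W)) w \<noteq> 0"
proof -
  have module: "is_module T W"
    using W(1) by (simp add: irreducible_module_def)
  have "v \<notin> design_kernel t"
    using v W(2) design_kernel_subset_design_space orth_compl_disjoint by blast
  then obtain F j where F: "F \<in> T" "1 \<le> j" "j \<le> t" "mvec (E j) (mvec F v) \<noteq> 0"
    unfolding design_kernel_def by blast
  have Fv: "mvec F v \<in> W"
    using module F(1) v(1) by (simp add: is_module_def)
  have jD: "j \<le> D"
    using F(3) t by simp
  have "dual_endpoint D E W \<le> j"
    using dual_endpoint_le[where E = E, OF jD Fv F(4)] .
  then show "dual_endpoint D E W \<le> t"
    using F(3) by simp
  show "dual_endpoint D E W \<le> D" and attained: "\<exists>w\<in>W. mvec (E (dual_endpoint D E W)) w \<noteq> 0"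
    using dual_endpoint_attained[where E = E, OF jD Fv F(4)] by simp_all
  show "1 \<le> dual_endpoint D E W"
    using attained E0_vanishes_on_orth_design_space[OF W(2)] by (metis less_one not_less)
qed

lemma component_annihilated_by_E:
  assumes "is_module T W" "v \<in> W" "\<chi> - v \<in> orth_compl W"
    and "1 \<le> k" "k < dual_degree D E \<chi>" "k \<le> D"
  shows "mvec (E k) v = 0"
  using assms(1-3)
proof (rule component_annihilated)
  show "mvec (E k) \<chi> = 0"
    using below_dual_degree assms(4-6) .
next
  show "mvec (E k) (a + b) = mvec (E k) a + mvec (E k) b" for a b
    by (rule mvec_add)
  show "mvec (E k) w \<in> U" if "is_module T U" "w \<in> U" for U w
    using that E_in_T[OF assms(6)] by (simp add: is_module_def)
qed

text \<open>The polynomial in \<open>A\<^sup>*\<^sub>1\<close> vanishing at the dual eigenvalues on the support of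
  \<open>\<chi>\<close> kills \<open>\<chi>\<close>, hence kills the component \<open>v\<close>.\<close>
lemma component_support:
  assumes "is_module T W" "v \<in> W" "\<chi> - v \<in> orth_compl W" "v y \<noteq> 0"
  shows "\<exists>y'. \<chi> y' \<noteq> 0 \<and> cls x y' = cls x y"
proof -
  define q where "q = (\<Prod>y'\<in>{y'. \<chi> y' \<noteq> 0}. [:- theta y', 1:])"
  have q: "poly q z = (\<Prod>y'\<in>{y'. \<chi> y' \<noteq> 0}. z - theta y')" for z
    by (simp add: q_def poly_prod)
  have "(\<lambda>y. poly q (E 1 x y)) * v = 0"
    using assms(1-3)
  proof (rule component_annihilated)
    show "(\<lambda>y. poly q (E 1 x y)) * \<chi> = 0"
    proof
      fix y
      show "((\<lambda>y. poly q (E 1 x y)) * \<chi>) y = 0 y"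
        by (cases "\<chi> y = 0") (auto simp: q theta_def)
    qed
  next
    show "(\<lambda>y. poly q (E 1 x y)) * (a + b) = (\<lambda>y. poly q (E 1 x y)) * a + (\<lambda>y. poly q (E 1 x y)) * b"
      for a b :: "'x vec"
      by (rule distrib_left)
    show "(\<lambda>y. poly q (E 1 x y)) * w \<in> U" if U: "is_module T U" "w \<in> U" for U w
      using subspace_poly_theta_mult[of U] module_theta_mult[OF U(1)] U by (simp add: is_module_iff)
  qed
  then have "poly q (theta y) = 0"
    using assms(4) by (auto simp: theta_def fun_eq_iff)
  then obtain y' where "\<chi> y' \<noteq> 0" "theta y = theta y'"
    by (auto simp: q)
  then show ?thesis
    using E1_eq_imp_cls_eq[of x y y'] by (auto simp: theta_def)
qed

lemma mvec_dual_idem: "mvec (dual_idem cls i x) w = (\<lambda>y. if cls x y = i then w y else 0)"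
  by (simp add: mvec_def dual_idem_def assoc_mat_def fun_eq_iff)

lemma card_component_support:
  assumes "is_module T W" "v \<in> W" "\<chi> - v \<in> orth_compl W"
  shows "card (theta ` {y. v y \<noteq> 0})
    \<le> card {i \<in> module_support D cls x W. mvec (dual_idem cls i x) \<chi> \<noteq> zero_vec}"
    (is "_ \<le> card ?S")
proof -
  have "cls x ` {y. v y \<noteq> 0} \<subseteq> ?S"
  proof
    fix i assume "i \<in> cls x ` {y. v y \<noteq> 0}"
    then obtain y where y: "v y \<noteq> 0" "i = cls x y"
      by blast
    obtain y' where "\<chi> y' \<noteq> 0" "cls x y' = cls x y"
      using component_support[OF assms y(1)] by blast
    then have "mvec (dual_idem cls i x) \<chi> \<noteq> 0"
      using y(2) by (auto simp: mvec_dual_idem fun_eq_iff)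
    moreover have "mvec (dual_idem cls i x) v \<noteq> 0"
      using y by (auto simp: mvec_dual_idem fun_eq_iff)
    ultimately show "i \<in> ?S"
      using assms(2) cls_le y(2) by (auto simp: module_support_def)
  qed
  moreover have "finite ?S"
    by (rule finite_subset[of _ "{..D}"]) (auto simp: module_support_def)
  ultimately have "card (cls x ` {y. v y \<noteq> 0}) \<le> card ?S"
    by (rule card_mono[rotated])
  moreover obtain g where "theta = (\<lambda>y. g (cls x y))"
    using theta_radial radial_iff by blast
  then have "theta ` {y. v y \<noteq> 0} = g ` cls x ` {y. v y \<noteq> 0}"
    by auto
  then have "card (theta ` {y. v y \<noteq> 0}) \<le> card (cls x ` {y. v y \<noteq> 0})"
    by (simp add: card_image_le)
  ultimately show ?thesis
    by linarith
qed

theorem code_in_design_space: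
  assumes t: "t \<le> D"
    and support_bound: "\<forall>W. irreducible_module T W \<and> 1 \<le> dual_endpoint D E W
          \<and> dual_endpoint D E W \<le> t \<longrightarrow>
        int (card {i \<in> module_support D cls x W. mvec (dual_idem cls i x) \<chi> \<noteq> zero_vec})
          \<le> int (dual_degree D E \<chi>) - int (dual_endpoint D E W)"
    and thin: "\<forall>W. irreducible_module T W \<and> dual_endpoint D E W \<le> t \<longrightarrow> dual_thin D E W"
  shows "\<chi> \<in> design_space t"
proof (rule ccontr)
  assume "\<chi> \<notin> design_space t"
  then obtain W v where W: "irreducible_module T W" "W \<subseteq> orth_compl (design_space t)"
    and v: "v \<in> W" "v \<noteq> 0" "\<chi> - v \<in> orth_compl W"
    by (rule irreducible_component_outside)
  have module: "is_module T W"
    using W(1) by (simp add: irreducible_module_def)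
  define r where "r = dual_endpoint D E W"
  have r: "1 \<le> r" "r \<le> t" "r \<le> D" and "\<exists>w\<in>W. mvec (E r) w \<noteq> 0"
    using dual_endpoint_orth_design_space[OF W v(1,2) t] by (simp_all add: r_def)
  then obtain w0 where w0: "w0 \<in> W" "mvec (E r) w0 \<noteq> 0"
    by blast
  have thin_W: "dual_thin D E W"
    using thin W(1) r(2) by (simp add: r_def)
  obtain m where m: "m \<le> D" "mvec (E m) v \<noteq> 0" "\<forall>k<m. mvec (E k) v = 0"
    using lowest_level_exists v(2) by blast
  have "r \<le> m"
    using below_dual_endpoint[of m D E W v] v(1) m(2) r(3) by (auto simp: r_def)
  then have "dual_degree D E \<chi> \<le> m"
    using component_annihilated_by_E[OF module v(1,3), of m] m(1,2) r(1) by linarith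
  moreover have "m < r + card (theta ` {y. v y \<noteq> 0})"
    using level_bound[OF W(1) thin_W w0 _ v(1) _ m(3,2,1)] by auto
  moreover have "int (card {i \<in> module_support D cls x W. mvec (dual_idem cls i x) \<chi> \<noteq> zero_vec})
      \<le> int (dual_degree D E \<chi>) - int r"
    using support_bound[rule_format, of W] W(1) r(1,2) by (simp add: r_def)
  ultimately show False
    using card_component_support[OF module v(1,3)] by linarith
qed

end

theorem corollary4p6:
  fixes D :: nat and cls :: "'x::finite \<Rightarrow> 'x \<Rightarrow> nat" and E :: "nat \<Rightarrow> 'x mat"
    and x :: 'x and \<chi> :: "'x vec" and t :: nat
  assumes "sym_assoc_scheme D cls"
    and "primitive_idempotents D cls E"
    and "cometric D E"
    and "is_code cls E \<chi>"
    and "1 \<le> t" and "t \<le> D"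
    and "\<forall>W. irreducible_module (terw_alg D cls E x) W \<and> 1 \<le> dual_endpoint D E W
              \<and> dual_endpoint D E W \<le> t \<longrightarrow>
            int (card {i \<in> module_support D cls x W. mvec (dual_idem cls i x) \<chi> \<noteq> zero_vec})
              \<le> int (dual_degree D E \<chi>) - int (dual_endpoint D E W)"
    and "\<forall>W. irreducible_module (terw_alg D cls E x) W \<and> dual_endpoint D E W \<le> t
              \<longrightarrow> dual_thin D E W"
  shows "\<forall>F\<in>terw_alg D cls E x. relative_design E (mvec F \<chi>) x t"
proof -
  interpret terwilliger D cls E x
    using assms(1-3,5,6) by unfold_locales simp_all
  have "\<chi> \<in> design_space t"
    using code_in_design_space assms(6-8) by blast
  then show ?thesis
    using relative_design_of_design_space assms(6) by blast
qed

end
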